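(* Let $n\ge 2d$. A symmetric form $f$ of degree $2d$ in $n$ variables is a sum of squares of forms in $T$ if and only if $f=\langle Q_1,A\rangle+\langle Q_2,B\rangle$ for some positive semidefinite real matrices $Q_1$ (of size $\pi(d)\times\pi(d)$) and $Q_2$ (of size $N\times N$, $N=\sum_{a=1}^d\pi(d-a)$).
   Context: $p_i=\frac1n(x_1^i+\dots+x_n^i)$, $p_\mu=\prod_i p_{\mu_i}$ for a partition $\mu$ (with $p_\emptyset=1$ for the empty partition of $0$). $\pi(k)$ = number of partitions of $k$. $H_{n,d}$ is the space of forms of degree $d$ in $n$ variables and $H^S_{n,k}$ the symmetric ones; $\mathcal{S}_n$ acts by permuting variables. $T\subseteq H_{n,d}$ is the $\mathcal{S}_n$-submodule generated by $H^S_{n,d}$ together with all forms $(x_1^a-x_2^a)g$ with $a\in\{1,\dots,d\}$ and $g\in H^S_{n,d-a}$. Let $\lambda_1,\dots,\lambda_{\pi(d)}$ be the partitions of $d$ and for $a\in\{1,\dots,d\}$ let $\mu^a_1,\dots,\mu^a_{\pi(d-a)}$ be the partitions of $d-a$. $A$ is the $\pi(d)\times\pi(d)$ matrix with $A_{i,j}=p_{\lambda_i}p_{\lambda_j}$. $B$ is the block matrix with blocks $B_{a,b}$ ($a,b\in\{1,\dots,d\}$) of size $\pi(d-a)\times\pi(d-b)$ with entries $(B_{a,b})_{i,j}=p_{\mu^a_i}p_{\mu^b_j}(p_{a+b}-p_ap_b)$. For symmetric matrices, $\langle X,Y\rangle=\operatorname{trace}(XY)$. *)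

theory Defs
  imports Complex_Main "HOL-Library.Multiset" "HOL-Combinatorics.Permutations"
begin

text \<open>Forms in n variables are represented as polynomial functions of
  x :: nat \<Rightarrow> real, using the variables x 0, ..., x (n-1).\<close>

definition exps :: "nat \<Rightarrow> nat \<Rightarrow> (nat \<Rightarrow> nat) set" where
  "exps n d = {\<alpha>. (\<forall>i. n \<le> i \<longrightarrow> \<alpha> i = 0) \<and> (\<Sum>i<n. \<alpha> i) = d}"

definition monom :: "nat \<Rightarrow> (nat \<Rightarrow> nat) \<Rightarrow> (nat \<Rightarrow> real) \<Rightarrow> real" where
  "monom n \<alpha> x = (\<Prod>i<n. x i ^ \<alpha> i)"

definition forms :: "nat \<Rightarrow> nat \<Rightarrow> ((nat \<Rightarrow> real) \<Rightarrow> real) set" where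
  "forms n d = {f. \<exists>c. f = (\<lambda>x. \<Sum>\<alpha>\<in>exps n d. c \<alpha> * monom n \<alpha> x)}"

definition perm_act :: "(nat \<Rightarrow> nat) \<Rightarrow> ((nat \<Rightarrow> real) \<Rightarrow> real) \<Rightarrow> ((nat \<Rightarrow> real) \<Rightarrow> real)" where
  "perm_act \<sigma> f = (\<lambda>x. f (\<lambda>i. x (\<sigma> i)))"

definition sym_forms :: "nat \<Rightarrow> nat \<Rightarrow> ((nat \<Rightarrow> real) \<Rightarrow> real) set" where
  "sym_forms n d = {f \<in> forms n d. \<forall>\<sigma>. \<sigma> permutes {..<n} \<longrightarrow> perm_act \<sigma> f = f}"

definition T_gens :: "nat \<Rightarrow> nat \<Rightarrow> ((nat \<Rightarrow> real) \<Rightarrow> real) set" where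
  "T_gens n d = sym_forms n d \<union>
     {(\<lambda>x. (x 0 ^ a - x 1 ^ a) * g x) | a g. a \<in> {1..d} \<and> g \<in> sym_forms n (d - a)}"

inductive_set Tmod :: "nat \<Rightarrow> nat \<Rightarrow> ((nat \<Rightarrow> real) \<Rightarrow> real) set" for n d where
  gen: "g \<in> T_gens n d \<Longrightarrow> g \<in> Tmod n d"
| zero: "(\<lambda>x. 0) \<in> Tmod n d"
| add: "f \<in> Tmod n d \<Longrightarrow> g \<in> Tmod n d \<Longrightarrow> (\<lambda>x. f x + g x) \<in> Tmod n d"
| smult: "f \<in> Tmod n d \<Longrightarrow> (\<lambda>x. c * f x) \<in> Tmod n d"
| perm: "f \<in> Tmod n d \<Longrightarrow> \<sigma> permutes {..<n} \<Longrightarrow> perm_act \<sigma> f \<in> Tmod n d"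

definition sos_of :: "((nat \<Rightarrow> real) \<Rightarrow> real) set \<Rightarrow> ((nat \<Rightarrow> real) \<Rightarrow> real) \<Rightarrow> bool" where
  "sos_of S f \<longleftrightarrow> (\<exists>hs. set hs \<subseteq> S \<and> f = (\<lambda>x. \<Sum>h\<leftarrow>hs. (h x)^2))"

definition psum :: "nat \<Rightarrow> nat \<Rightarrow> (nat \<Rightarrow> real) \<Rightarrow> real" where
  "psum n i x = (\<Sum>j<n. x j ^ i) / real n"

definition int_partitions :: "nat \<Rightarrow> nat multiset set" where
  "int_partitions k = {M. (\<forall>i\<in>#M. 0 < i) \<and> sum_mset M = k}"

definition pmu :: "nat \<Rightarrow> nat multiset \<Rightarrow> (nat \<Rightarrow> real) \<Rightarrow> real" where
  "pmu n M x = prod_mset (image_mset (\<lambda>i. psum n i x) M)"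

definition Amat :: "nat \<Rightarrow> nat multiset \<Rightarrow> nat multiset \<Rightarrow> (nat \<Rightarrow> real) \<Rightarrow> real" where
  "Amat n l m x = pmu n l x * pmu n m x"

definition Bidx :: "nat \<Rightarrow> (nat \<times> nat multiset) set" where
  "Bidx d = {(a, \<mu>). a \<in> {1..d} \<and> \<mu> \<in> int_partitions (d - a)}"

definition Bmat :: "nat \<Rightarrow> nat \<times> nat multiset \<Rightarrow> nat \<times> nat multiset \<Rightarrow> (nat \<Rightarrow> real) \<Rightarrow> real" where
  "Bmat n ia jb x = (case ia of (a, \<mu>) \<Rightarrow> case jb of (b, \<nu>) \<Rightarrow>
      pmu n \<mu> x * pmu n \<nu> x * (psum n (a + b) x - psum n a x * psum n b x))"

definition psd_on :: "'i set \<Rightarrow> ('i \<Rightarrow> 'i \<Rightarrow> real) \<Rightarrow> bool" where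
  "psd_on I Q \<longleftrightarrow> (\<forall>i\<in>I. \<forall>j\<in>I. Q i j = Q j i) \<and>
     (\<forall>v. 0 \<le> (\<Sum>i\<in>I. \<Sum>j\<in>I. v i * Q i j * v j))"

definition trace_inner :: "'i set \<Rightarrow> ('i \<Rightarrow> 'i \<Rightarrow> real) \<Rightarrow> ('i \<Rightarrow> 'i \<Rightarrow> real) \<Rightarrow> real" where
  "trace_inner I X Y = (\<Sum>i\<in>I. \<Sum>j\<in>I. X i j * Y j i)"

end

theory Submission
  imports Defs
begin

text \<open>
  Write \<open>h \<in> T\<close> as \<open>h = s + \<Sum>\<^sub>a \<Sum>\<^sub>i x\<^sub>i\<^sup>a g\<^sub>a\<^sub>,\<^sub>i\<close> with \<open>s\<close> and all \<open>g\<^sub>a\<^sub>,\<^sub>i\<close> symmetric and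
  \<open>\<Sum>\<^sub>i g\<^sub>a\<^sub>,\<^sub>i = 0\<close>: the generators have this form and permuting the variables only permutes the
  \<open>g\<^sub>a\<^sub>,\<^sub>i\<close>. A symmetric \<open>f = \<Sum> h\<^sub>k\<^sup>2\<close> equals the average of \<open>\<Sum> h\<^sub>k\<^sup>2\<close> over \<open>S\<^sub>n\<close>. Averaging
  \<open>h\<^sup>2\<close> kills the cross terms, and since \<open>x\<^sub>\<sigma>\<^sub>(\<^sub>i\<^sub>)\<^sup>a x\<^sub>\<sigma>\<^sub>(\<^sub>j\<^sub>)\<^sup>b\<close> averages to a value independent of
  \<open>i \<noteq> j\<close>, the condition \<open>\<Sum>\<^sub>i g\<^sub>a\<^sub>,\<^sub>i = 0\<close> leaves only
  \<open>s\<^sup>2 + n/(n-1) \<Sum>\<^sub>i \<Sum>\<^sub>a\<^sub>,\<^sub>b g\<^sub>a\<^sub>,\<^sub>i g\<^sub>b\<^sub>,\<^sub>i (p\<^sub>a\<^sub>+\<^sub>b - p\<^sub>a p\<^sub>b)\<close>. As the products \<open>p\<^sub>\<lambda>\<close>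
  span the symmetric forms, this is \<open>\<langle>Q\<^sub>1, A\<rangle> + \<langle>Q\<^sub>2, B\<rangle>\<close> with Gram matrices \<open>Q\<^sub>1, Q\<^sub>2\<close>.
  Conversely, a Gram decomposition \<open>Q = \<Sum> w w\<^sup>T\<close> turns \<open>\<langle>Q\<^sub>1, A\<rangle>\<close> into squares of symmetric
  forms, and \<open>\<langle>w w\<^sup>T, B\<rangle>\<close> into \<open>1/(2n\<^sup>2) \<Sum>\<^sub>i\<^sub>,\<^sub>j (\<Sum>\<^sub>a (x\<^sub>i\<^sup>a - x\<^sub>j\<^sup>a) G\<^sub>a)\<^sup>2\<close>, using
  \<open>\<Sum>\<^sub>i\<^sub>,\<^sub>j (x\<^sub>i\<^sup>a - x\<^sub>j\<^sup>a)(x\<^sub>i\<^sup>b - x\<^sub>j\<^sup>b) = 2n\<^sup>2 (p\<^sub>a\<^sub>+\<^sub>b - p\<^sub>a p\<^sub>b)\<close>.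
\<close>

section \<open>Forms and power sums\<close>

lemma size_le_sum_mset_if_pos: "\<forall>i\<in>#M. 0 < i \<Longrightarrow> size M \<le> sum_mset (M :: nat multiset)"
  by (induction M) auto

lemma member_le_sum_mset: "i \<in># M \<Longrightarrow> i \<le> sum_mset (M :: nat multiset)"
  by (metis le_add1 multi_member_split sum_mset.add_mset)

lemma finite_int_partitions: "finite (int_partitions k)"
proof (rule finite_subset)
  show "int_partitions k \<subseteq> (\<Union>s\<in>{..k}. multisets_of_size {1..k} s)"
  proof
    fix M assume M: "M \<in> int_partitions k"
    hence pos: "\<forall>i\<in>#M. 0 < i" and sum: "sum_mset M = k" by (auto simp: int_partitions_def)
    have "size M \<le> k" using size_le_sum_mset_if_pos[OF pos] sum by simp
    moreover have "set_mset M \<subseteq> {1..k}"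
      using pos sum member_le_sum_mset[of _ M] by force
    ultimately show "M \<in> (\<Union>s\<in>{..k}. multisets_of_size {1..k} s)"
      by (auto simp: multisets_of_size_def)
  qed
qed (intro finite_UN_I finite_atMost finite_multisets_of_size finite_atLeastAtMost)

lemma finite_exps: "finite (exps n d)"
proof (rule finite_subset)
  show "exps n d \<subseteq> {\<alpha>. \<forall>i. (i \<in> {..<n} \<longrightarrow> \<alpha> i \<in> {..d}) \<and> (i \<notin> {..<n} \<longrightarrow> \<alpha> i = 0)}"
  proof (intro subsetI CollectI allI conjI impI)
    fix \<alpha> i assume "\<alpha> \<in> exps n d"
    then show "i \<in> {..<n} \<Longrightarrow> \<alpha> i \<in> {..d}" "i \<notin> {..<n} \<Longrightarrow> \<alpha> i = 0"
      using member_le_sum[of i "{..<n}" \<alpha>] by (auto simp: exps_def)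
  qed
qed (rule finite_set_of_finite_funs; simp)

lemma sum_mult_group_fibres:
  fixes c :: "'j \<Rightarrow> real"
  assumes "finite J" "finite T" "\<phi> ` J \<subseteq> T"
  shows "(\<Sum>j\<in>J. c j * F (\<phi> j)) = (\<Sum>t\<in>T. (\<Sum>j | j \<in> J \<and> \<phi> j = t. c j) * F t)"
proof -
  have "(\<Sum>j\<in>J. c j * F (\<phi> j)) = (\<Sum>t\<in>T. \<Sum>j | j \<in> J \<and> \<phi> j = t. c j * F (\<phi> j))"
    using sum.group[OF assms, of "\<lambda>j. c j * F (\<phi> j)"] by simp
  also have "\<dots> = (\<Sum>t\<in>T. (\<Sum>j | j \<in> J \<and> \<phi> j = t. c j) * F t)"
    by (intro sum.cong refl) (simp add: sum_distrib_right)
  finally show ?thesis .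
qed

lemma sum_rotate3: "(\<Sum>a\<in>A. \<Sum>b\<in>B. \<Sum>i\<in>I. F a b i) = (\<Sum>i\<in>I. \<Sum>a\<in>A. \<Sum>b\<in>B. F a b i)"
proof -
  have "(\<Sum>a\<in>A. \<Sum>b\<in>B. \<Sum>i\<in>I. F a b i) = (\<Sum>a\<in>A. \<Sum>i\<in>I. \<Sum>b\<in>B. F a b i)"
    by (rule sum.cong[OF refl], rule sum.swap)
  also have "\<dots> = (\<Sum>i\<in>I. \<Sum>a\<in>A. \<Sum>b\<in>B. F a b i)"
    by (rule sum.swap)
  finally show ?thesis .
qed

lemma formsI: "f = (\<lambda>x. \<Sum>\<alpha>\<in>exps n k. c \<alpha> * monom n \<alpha> x) \<Longrightarrow> f \<in> forms n k"
  unfolding forms_def by blast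

lemma forms_sum_monom:
  assumes "finite J" "\<And>j. j \<in> J \<Longrightarrow> \<phi> j \<in> exps n k"
  shows "(\<lambda>x. \<Sum>j\<in>J. c j * monom n (\<phi> j) x) \<in> forms n k"
  by (rule formsI, rule ext, rule sum_mult_group_fibres) (use assms finite_exps in auto)

lemma forms_add:
  assumes "f \<in> forms n k" "g \<in> forms n k"
  shows "(\<lambda>x. f x + g x) \<in> forms n k"
proof -
  obtain c c' where "f = (\<lambda>x. \<Sum>\<alpha>\<in>exps n k. c \<alpha> * monom n \<alpha> x)"
    and "g = (\<lambda>x. \<Sum>\<alpha>\<in>exps n k. c' \<alpha> * monom n \<alpha> x)"
    using assms by (auto simp: forms_def)
  then show ?thesis
    by (intro formsI[where c = "\<lambda>\<alpha>. c \<alpha> + c' \<alpha>"]) (simp add: sum.distrib distrib_right)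
qed

lemma forms_smult:
  assumes "f \<in> forms n k"
  shows "(\<lambda>x. a * f x) \<in> forms n k"
proof -
  obtain c where "f = (\<lambda>x. \<Sum>\<alpha>\<in>exps n k. c \<alpha> * monom n \<alpha> x)"
    using assms by (auto simp: forms_def)
  then show ?thesis
    by (intro formsI[where c = "\<lambda>\<alpha>. a * c \<alpha>"]) (simp add: sum_distrib_left mult.assoc)
qed

lemma forms_zero: "(\<lambda>x. 0) \<in> forms n k"
  by (rule formsI[where c = "\<lambda>_. 0"]) simp

lemma forms_lincomb:
  assumes "finite J" "\<And>j. j \<in> J \<Longrightarrow> f j \<in> forms n k"
  shows "(\<lambda>x. \<Sum>j\<in>J. c j * f j x) \<in> forms n k"
  using assms
proof (induction J rule: finite_induct)
  case (insert j J)
  then have "(\<lambda>x. c j * f j x + (\<Sum>j\<in>J. c j * f j x)) \<in> forms n k"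
    by (intro forms_add forms_smult) auto
  with insert show ?case by simp
qed (simp add: forms_zero)

lemma monom_add: "monom n (\<lambda>i. \<alpha> i + \<beta> i) x = monom n \<alpha> x * monom n \<beta> x"
  by (simp add: monom_def power_add prod.distrib)

lemma exps_add: "\<alpha> \<in> exps n a \<Longrightarrow> \<beta> \<in> exps n b \<Longrightarrow> (\<lambda>i. \<alpha> i + \<beta> i) \<in> exps n (a + b)"
  by (simp add: exps_def sum.distrib)

lemma forms_mult:
  assumes "f \<in> forms n a" "g \<in> forms n b"
  shows "(\<lambda>x. f x * g x) \<in> forms n (a + b)"
proof -
  obtain c c' where f: "f = (\<lambda>x. \<Sum>\<alpha>\<in>exps n a. c \<alpha> * monom n \<alpha> x)"
    and g: "g = (\<lambda>x. \<Sum>\<beta>\<in>exps n b. c' \<beta> * monom n \<beta> x)"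
    using assms by (auto simp: forms_def)
  have "f x * g x = (\<Sum>p\<in>exps n a \<times> exps n b.
          (c (fst p) * c' (snd p)) * monom n (\<lambda>i. fst p i + snd p i) x)" for x
  proof -
    have "f x * g x = (\<Sum>\<alpha>\<in>exps n a. \<Sum>\<beta>\<in>exps n b. (c \<alpha> * monom n \<alpha> x) * (c' \<beta> * monom n \<beta> x))"
      by (simp add: f g sum_product)
    also have "\<dots> = (\<Sum>p\<in>exps n a \<times> exps n b. (c (fst p) * monom n (fst p) x) * (c' (snd p) * monom n (snd p) x))"
      by (simp add: sum.cartesian_product split_def)
    finally show ?thesis by (simp add: monom_add mult_ac)
  qed
  moreover have "(\<lambda>x. \<Sum>p\<in>exps n a \<times> exps n b.
          (c (fst p) * c' (snd p)) * monom n (\<lambda>i. fst p i + snd p i) x) \<in> forms n (a + b)"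
    by (rule forms_sum_monom) (auto simp: finite_exps intro: exps_add)
  ultimately show ?thesis by simp
qed

lemma monom_unit: "j < n \<Longrightarrow> monom n (\<lambda>k. if k = j then i else 0) x = x j ^ i"
proof -
  assume j: "j < n"
  have "monom n (\<lambda>k. if k = j then i else 0) x = (\<Prod>k<n. if k = j then x j ^ i else 1)"
    unfolding monom_def by (intro prod.cong refl) auto
  also have "\<dots> = x j ^ i" using j by simp
  finally show ?thesis .
qed

lemma psum_in_forms: "psum n i \<in> forms n i"
proof -
  have "psum n i = (\<lambda>x. \<Sum>j<n. (1 / real n) * monom n (\<lambda>k. if k = j then i else 0) x)"
    by (intro ext) (simp add: psum_def monom_unit sum_divide_distrib)
  also have "\<dots> \<in> forms n i"
    by (rule forms_sum_monom) (auto simp: exps_def)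
  finally show ?thesis .
qed

lemma const_one_in_forms: "(\<lambda>x. 1) \<in> forms n 0"
proof -
  have "(\<lambda>x. 1 :: real) = (\<lambda>x. \<Sum>j\<in>{0::nat}. 1 * monom n (\<lambda>k. 0) x)"
    by (simp add: monom_def)
  also have "\<dots> \<in> forms n 0" by (rule forms_sum_monom) (auto simp: exps_def)
  finally show ?thesis .
qed

lemma pmu_empty [simp]: "pmu n {#} x = 1"
  by (simp add: pmu_def)

lemma pmu_add_mset [simp]: "pmu n (add_mset i M) x = psum n i x * pmu n M x"
  by (simp add: pmu_def)

lemma pmu_in_forms: "pmu n M \<in> forms n (sum_mset M)"
proof (induction M)
  case empty
  then show ?case using const_one_in_forms by (simp add: pmu_def)
next
  case (add i M)
  then have "(\<lambda>x. psum n i x * pmu n M x) \<in> forms n (i + sum_mset M)"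
    by (intro forms_mult psum_in_forms)
  then show ?case by simp
qed

lemma sum_power_eq_psum: "(\<Sum>i<n. x i ^ a) = real n * psum n a x"
  by (cases "n = 0") (simp_all add: psum_def)

lemma sum_permute_lessThan:
  assumes "\<sigma> permutes {..<n}"
  shows "(\<Sum>i<n. F (\<sigma> i)) = (\<Sum>i<n. F i)"
  using sum.permute[OF assms, of F] by (simp add: o_def)

lemma psum_permute_vars: "\<sigma> permutes {..<n} \<Longrightarrow> psum n i (\<lambda>k. x (\<sigma> k)) = psum n i x"
  unfolding psum_def by (subst sum_permute_lessThan[where F = "\<lambda>j. x j ^ i"]) simp_all

lemma pmu_permute_vars: "\<sigma> permutes {..<n} \<Longrightarrow> pmu n M (\<lambda>k. x (\<sigma> k)) = pmu n M x"
  by (simp add: pmu_def psum_permute_vars)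

section \<open>Power sums span the symmetric forms\<close>

definition psum_span :: "nat \<Rightarrow> nat \<Rightarrow> ((nat \<Rightarrow> real) \<Rightarrow> real) set" where
  "psum_span n k = {g. \<exists>c. g = (\<lambda>x. \<Sum>\<mu>\<in>int_partitions k. c \<mu> * pmu n \<mu> x)}"

lemma psum_spanI: "g = (\<lambda>x. \<Sum>\<mu>\<in>int_partitions k. c \<mu> * pmu n \<mu> x) \<Longrightarrow> g \<in> psum_span n k"
  unfolding psum_span_def by blast

lemma sum_pmu_in_psum_span:
  assumes "finite J" "\<And>j. j \<in> J \<Longrightarrow> \<mu>s j \<in> int_partitions k"
  shows "(\<lambda>x. \<Sum>j\<in>J. c j * pmu n (\<mu>s j) x) \<in> psum_span n k"
  by (rule psum_spanI, rule ext, rule sum_mult_group_fibres) (use assms finite_int_partitions in auto)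

lemma pmu_in_psum_span: "\<mu> \<in> int_partitions k \<Longrightarrow> pmu n \<mu> \<in> psum_span n k"
  using sum_pmu_in_psum_span[of "{0::nat}" "\<lambda>_. \<mu>" k "\<lambda>_. 1" n] by simp

lemma psum_span_add:
  assumes "f \<in> psum_span n k" "g \<in> psum_span n k"
  shows "(\<lambda>x. f x + g x) \<in> psum_span n k"
proof -
  obtain c c' where "f = (\<lambda>x. \<Sum>\<mu>\<in>int_partitions k. c \<mu> * pmu n \<mu> x)"
    and "g = (\<lambda>x. \<Sum>\<mu>\<in>int_partitions k. c' \<mu> * pmu n \<mu> x)"
    using assms by (auto simp: psum_span_def)
  then show ?thesis
    by (intro psum_spanI[where c = "\<lambda>\<mu>. c \<mu> + c' \<mu>"]) (simp add: sum.distrib distrib_right)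
qed

lemma psum_span_smult:
  assumes "f \<in> psum_span n k"
  shows "(\<lambda>x. a * f x) \<in> psum_span n k"
proof -
  obtain c where "f = (\<lambda>x. \<Sum>\<mu>\<in>int_partitions k. c \<mu> * pmu n \<mu> x)"
    using assms by (auto simp: psum_span_def)
  then show ?thesis
    by (intro psum_spanI[where c = "\<lambda>\<mu>. a * c \<mu>"]) (simp add: sum_distrib_left mult.assoc)
qed

lemma psum_span_diff:
  assumes "f \<in> psum_span n k" "g \<in> psum_span n k"
  shows "(\<lambda>x. f x - g x) \<in> psum_span n k"
  using psum_span_add[OF assms(1) psum_span_smult[OF assms(2), of "-1"]] by simp

lemma psum_span_sum:
  assumes "finite J" "\<And>j. j \<in> J \<Longrightarrow> f j \<in> psum_span n k"
  shows "(\<lambda>x. \<Sum>j\<in>J. f j x) \<in> psum_span n k"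
  using assms
proof (induction J rule: finite_induct)
  case empty
  show ?case by (rule psum_spanI[where c = "\<lambda>_. 0"]) simp
next
  case (insert j J)
  then have "(\<lambda>x. f j x + (\<Sum>j\<in>J. f j x)) \<in> psum_span n k"
    by (intro psum_span_add) auto
  with insert show ?case by simp
qed

lemma psum_mult_in_psum_span:
  assumes "g \<in> psum_span n k"
  shows "(\<lambda>x. psum n a x * g x) \<in> psum_span n (a + k)"
proof (cases "a = 0")
  case True
  then have "(\<lambda>x. psum n a x * g x) = (\<lambda>x. (if n = 0 then 0 else 1) * g x)"
    by (simp add: psum_def)
  then show ?thesis using psum_span_smult[OF assms] True by simp
next
  case False
  obtain c where c: "g = (\<lambda>x. \<Sum>\<mu>\<in>int_partitions k. c \<mu> * pmu n \<mu> x)"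
    using assms by (auto simp: psum_span_def)
  have "(\<lambda>x. \<Sum>\<mu>\<in>int_partitions k. c \<mu> * pmu n (add_mset a \<mu>) x) \<in> psum_span n (a + k)"
    by (rule sum_pmu_in_psum_span[OF finite_int_partitions]) (use False in \<open>auto simp: int_partitions_def\<close>)
  then show ?thesis by (simp add: c sum_distrib_left mult_ac)
qed

lemma psum_span_subset_sym_forms: "psum_span n k \<subseteq> sym_forms n k"
proof
  fix g assume "g \<in> psum_span n k"
  then obtain c where c: "g = (\<lambda>x. \<Sum>\<mu>\<in>int_partitions k. c \<mu> * pmu n \<mu> x)"
    by (auto simp: psum_span_def)
  have "g \<in> forms n k" unfolding c
    by (rule forms_lincomb[OF finite_int_partitions]) (use pmu_in_forms in \<open>auto simp: int_partitions_def\<close>)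
  moreover have "perm_act \<sigma> g = g" if "\<sigma> permutes {..<n}" for \<sigma>
    by (simp add: c perm_act_def pmu_permute_vars[OF that])
  ultimately show "g \<in> sym_forms n k" by (simp add: sym_forms_def)
qed

definition distinct_lists :: "nat \<Rightarrow> nat \<Rightarrow> nat list set" where
  "distinct_lists n l = {js. distinct js \<and> length js = l \<and> set js \<subseteq> {..<n}}"

lemma finite_distinct_lists: "finite (distinct_lists n l)"
proof (rule finite_subset)
  show "distinct_lists n l \<subseteq> {xs. set xs \<subseteq> {..<n} \<and> length xs = l}"
    by (auto simp: distinct_lists_def)
qed (rule finite_lists_length_eq; simp)

lemma distinct_lists_0 [simp]: "distinct_lists n 0 = {[]}"
  by (auto simp: distinct_lists_def)

lemma sum_distinct_lists_Suc:
  "(\<Sum>js\<in>distinct_lists n (Suc l). F js) = (\<Sum>js\<in>distinct_lists n l. \<Sum>i\<in>{..<n} - set js. F (i # js))"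
proof -
  let ?A = "SIGMA js:distinct_lists n l. {..<n} - set js"
  have "bij_betw (\<lambda>(js, i). i # js) ?A (distinct_lists n (Suc l))"
  proof (rule bij_betw_byWitness[where f' = "\<lambda>ks. (tl ks, hd ks)"])
    show "(\<lambda>ks. (tl ks, hd ks)) ` distinct_lists n (Suc l) \<subseteq> ?A"
      by (auto simp: distinct_lists_def length_Suc_conv)
  qed (auto simp: distinct_lists_def length_Suc_conv)
  then have "(\<Sum>js\<in>distinct_lists n (Suc l). F js) = (\<Sum>p\<in>?A. F (snd p # fst p))"
    by (simp add: sum.reindex_bij_betw[symmetric] split_def)
  also have "\<dots> = (\<Sum>js\<in>distinct_lists n l. \<Sum>i\<in>{..<n} - set js. F (i # js))"
    by (subst sum.Sigma) (auto simp: finite_distinct_lists split_def)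
  finally show ?thesis .
qed

definition aug_monomial :: "nat \<Rightarrow> nat list \<Rightarrow> (nat \<Rightarrow> real) \<Rightarrow> real" where
  "aug_monomial n e x = (\<Sum>js\<in>distinct_lists n (length e). \<Prod>t<length e. x (js ! t) ^ (e ! t))"

lemma prod_power_list_update:
  assumes "t < length e"
  shows "(\<Prod>s<length e. y s ^ (e[t := e ! t + a] ! s)) = y t ^ a * (\<Prod>s<length e. y s ^ (e ! s))"
proof -
  have "(\<Prod>s<length e. y s ^ (e[t := e ! t + a] ! s)) =
        (\<Prod>s<length e. (if s = t then y t ^ a else 1) * y s ^ (e ! s))"
    using assms by (intro prod.cong refl) (auto simp: nth_list_update power_add mult.commute)
  also have "\<dots> = y t ^ a * (\<Prod>s<length e. y s ^ (e ! s))"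
    using assms by (simp add: prod.distrib)
  finally show ?thesis .
qed

text \<open>Newton-type recursion: multiplying by a power sum either adds a new distinct variable or
  raises the exponent of one already present.\<close>

lemma aug_monomial_Cons:
  "aug_monomial n (a # e) x =
     real n * psum n a x * aug_monomial n e x - (\<Sum>t<length e. aug_monomial n (e[t := e ! t + a]) x)"
proof -
  let ?P = "\<lambda>js. \<Prod>t<length e. x (js ! t) ^ (e ! t)"
  have "aug_monomial n (a # e) x = (\<Sum>js\<in>distinct_lists n (length e). \<Sum>i\<in>{..<n} - set js. x i ^ a * ?P js)"
    unfolding aug_monomial_def length_Cons sum_distinct_lists_Suc prod.lessThan_Suc_shift by simp
  also have "\<dots> = (\<Sum>js\<in>distinct_lists n (length e). (real n * psum n a x - (\<Sum>t<length e. x (js ! t) ^ a)) * ?P js)"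
  proof (intro sum.cong refl)
    fix js assume js: "js \<in> distinct_lists n (length e)"
    then have "(\<Sum>i\<in>{..<n} - set js. x i ^ a) = (\<Sum>i<n. x i ^ a) - (\<Sum>i\<in>set js. x i ^ a)"
      by (intro sum_diff) (auto simp: distinct_lists_def)
    also have "(\<Sum>i\<in>set js. x i ^ a) = (\<Sum>t<length e. x (js ! t) ^ a)"
      using js by (simp add: distinct_lists_def sum.distinct_set_conv_list sum_list_sum_nth atLeast0LessThan)
    finally have "(\<Sum>i\<in>{..<n} - set js. x i ^ a) = real n * psum n a x - (\<Sum>t<length e. x (js ! t) ^ a)"
      by (simp only: sum_power_eq_psum[where n = n and x = x and a = a])
    then show "(\<Sum>i\<in>{..<n} - set js. x i ^ a * ?P js) = (real n * psum n a x - (\<Sum>t<length e. x (js ! t) ^ a)) * ?P js"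
      by (simp only: sum_distrib_right[symmetric])
  qed
  also have "\<dots> = real n * psum n a x * aug_monomial n e x
      - (\<Sum>js\<in>distinct_lists n (length e). \<Sum>t<length e. x (js ! t) ^ a * ?P js)"
    by (simp add: aug_monomial_def left_diff_distrib sum_subtractf sum_distrib_left sum_distrib_right mult.assoc)
  also have "(\<Sum>js\<in>distinct_lists n (length e). \<Sum>t<length e. x (js ! t) ^ a * ?P js) =
      (\<Sum>t<length e. aug_monomial n (e[t := e ! t + a]) x)"
    unfolding aug_monomial_def
    by (subst sum.swap) (auto intro!: sum.cong simp: prod_power_list_update[where y = "\<lambda>s. x (_ ! s)"])
  finally show ?thesis .
qed

lemma sum_list_update_add: "t < length e \<Longrightarrow> sum_list (e[t := e ! t + a]) = sum_list e + (a :: nat)"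
  by (induction e arbitrary: t) (auto simp: nth_Cons split: nat.splits)

lemma aug_monomial_in_psum_span: "aug_monomial n e \<in> psum_span n (sum_list e)"
proof (induction "length e" arbitrary: e)
  case 0
  have "e = []" using 0 by simp
  moreover have "aug_monomial n [] = pmu n {#}" by (simp add: aug_monomial_def fun_eq_iff)
  moreover have "pmu n {#} \<in> psum_span n 0" by (rule pmu_in_psum_span) (simp add: int_partitions_def)
  ultimately show ?case by (simp only: sum_list.Nil)
next
  case (Suc l)
  then obtain a e' where e: "e = a # e'" and l: "length e' = l" by (cases e) auto
  have "(\<lambda>x. real n * psum n a x * aug_monomial n e' x) \<in> psum_span n (a + sum_list e')"
    using psum_span_smult[OF psum_mult_in_psum_span[OF Suc.hyps(1)[OF l[symmetric]]], of "real n"]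
    by (simp add: mult.assoc)
  moreover have "(\<lambda>x. \<Sum>t<length e'. aug_monomial n (e'[t := e' ! t + a]) x) \<in> psum_span n (a + sum_list e')"
  proof (rule psum_span_sum)
    fix t assume "t \<in> {..<length e'}"
    then show "aug_monomial n (e'[t := e' ! t + a]) \<in> psum_span n (a + sum_list e')"
      using Suc.hyps(1)[of "e'[t := e' ! t + a]"] l sum_list_update_add[of t e' a] by (simp add: add.commute)
  qed simp
  ultimately show ?case
    unfolding e aug_monomial_Cons[abs_def] by (simp add: psum_span_diff)
qed

lemma bij_betw_permutes_distinct_lists:
  "bij_betw (\<lambda>\<sigma>. map \<sigma> [0..<n]) {\<sigma>. \<sigma> permutes {..<n}} (distinct_lists n n)"
proof (rule bij_betw_imageI)
  show "inj_on (\<lambda>\<sigma>. map \<sigma> [0..<n]) {\<sigma>. \<sigma> permutes {..<n}}"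
  proof (rule inj_onI, rule ext)
    fix \<sigma> \<tau> i
    assume "\<sigma> \<in> {\<sigma>. \<sigma> permutes {..<n}}" "\<tau> \<in> {\<sigma>. \<sigma> permutes {..<n}}" "map \<sigma> [0..<n] = map \<tau> [0..<n]"
    then show "\<sigma> i = \<tau> i"
      by (cases "i < n") (auto simp: permutes_not_in dest: map_eq_conv[THEN iffD1])
  qed
  show "(\<lambda>\<sigma>. map \<sigma> [0..<n]) ` {\<sigma>. \<sigma> permutes {..<n}} = distinct_lists n n"
  proof (intro equalityI subsetI)
    fix js assume "js \<in> (\<lambda>\<sigma>. map \<sigma> [0..<n]) ` {\<sigma>. \<sigma> permutes {..<n}}"
    then obtain \<sigma> where \<sigma>: "\<sigma> permutes {..<n}" and js: "js = map \<sigma> [0..<n]" by auto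
    have "inj_on \<sigma> {..<n}" using \<sigma> by (rule permutes_inj_on)
    moreover have "\<sigma> i < n" if "i < n" for i using permutes_in_image[OF \<sigma>, of i] that by simp
    ultimately show "js \<in> distinct_lists n n"
      by (auto simp: distinct_lists_def js distinct_map atLeast0LessThan)
  next
    fix js assume js: "js \<in> distinct_lists n n"
    then have d: "distinct js" and len: "length js = n" and sub: "set js \<subseteq> {..<n}"
      by (auto simp: distinct_lists_def)
    have set_js: "set js = {..<n}"
      using card_subset_eq[OF finite_lessThan sub] d len by (simp add: distinct_card)
    define \<sigma> where "\<sigma> = (\<lambda>i. if i < n then js ! i else i)"
    have "bij_betw \<sigma> {..<n} {..<n}"
    proof (rule bij_betw_imageI)
      show "inj_on \<sigma> {..<n}" using d len by (auto simp: inj_on_def \<sigma>_def nth_eq_iff_index_eq)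
      show "\<sigma> ` {..<n} = {..<n}" using len set_js by (auto simp: \<sigma>_def set_conv_nth image_def)
    qed
    then have "\<sigma> permutes {..<n}" by (rule bij_imp_permutes) (simp add: \<sigma>_def)
    moreover have "map \<sigma> [0..<n] = js" using len by (intro nth_equalityI) (auto simp: \<sigma>_def)
    ultimately show "js \<in> (\<lambda>\<sigma>. map \<sigma> [0..<n]) ` {\<sigma>. \<sigma> permutes {..<n}}" by force
  qed
qed

lemma card_permutes_lessThan: "card {\<sigma>. \<sigma> permutes {..<n :: nat}} = fact n"
  by (rule card_permutations) simp_all

lemma sym_form_eq_average:
  assumes "f \<in> sym_forms n k"
  shows "f x = (\<Sum>\<sigma> | \<sigma> permutes {..<n}. f (\<lambda>i. x (\<sigma> i))) / fact n"
proof -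
  have "f (\<lambda>i. x (\<sigma> i)) = f x" if "\<sigma> permutes {..<n}" for \<sigma>
  proof -
    have "perm_act \<sigma> f = f" using assms that by (simp add: sym_forms_def)
    from fun_cong[OF this, of x] show ?thesis by (simp add: perm_act_def)
  qed
  then show ?thesis by (simp add: card_permutes_lessThan)
qed

text \<open>Averaging the monomial expansion of \<open>f\<close> over \<open>S\<^sub>n\<close> turns every monomial into an augmented
  monomial symmetric function.\<close>

lemma sym_forms_subset_psum_span: "sym_forms n k \<subseteq> psum_span n k"
proof
  fix f assume f: "f \<in> sym_forms n k"
  then obtain c where c: "f = (\<lambda>x. \<Sum>\<alpha>\<in>exps n k. c \<alpha> * monom n \<alpha> x)"
    by (auto simp: sym_forms_def forms_def)
  have "f = (\<lambda>x. \<Sum>\<alpha>\<in>exps n k. (c \<alpha> / fact n) * aug_monomial n (map \<alpha> [0..<n]) x)"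
  proof
    fix x
    let ?P = "{\<sigma>. \<sigma> permutes {..<n}}"
    have perm_sum: "(\<Sum>\<sigma>\<in>?P. \<Prod>i<n. x (\<sigma> i) ^ \<alpha> i) = aug_monomial n (map \<alpha> [0..<n]) x" for \<alpha>
    proof -
      have "(\<Sum>\<sigma>\<in>?P. \<Prod>i<n. x (\<sigma> i) ^ \<alpha> i) = (\<Sum>\<sigma>\<in>?P. \<Prod>t<n. x (map \<sigma> [0..<n] ! t) ^ \<alpha> t)"
        by (intro sum.cong prod.cong) auto
      also have "\<dots> = (\<Sum>js\<in>distinct_lists n n. \<Prod>t<n. x (js ! t) ^ \<alpha> t)"
        by (rule sum.reindex_bij_betw[OF bij_betw_permutes_distinct_lists])
      also have "\<dots> = aug_monomial n (map \<alpha> [0..<n]) x"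
        by (auto simp: aug_monomial_def intro!: sum.cong prod.cong)
      finally show ?thesis .
    qed
    have "(\<Sum>\<sigma>\<in>?P. f (\<lambda>i. x (\<sigma> i))) = (\<Sum>\<alpha>\<in>exps n k. c \<alpha> * (\<Sum>\<sigma>\<in>?P. \<Prod>i<n. x (\<sigma> i) ^ \<alpha> i))"
      unfolding c monom_def by (simp add: sum.swap[of _ ?P] sum_distrib_left)
    also have "\<dots> = (\<Sum>\<alpha>\<in>exps n k. c \<alpha> * aug_monomial n (map \<alpha> [0..<n]) x)"
      by (simp add: perm_sum)
    finally show "f x = (\<Sum>\<alpha>\<in>exps n k. (c \<alpha> / fact n) * aug_monomial n (map \<alpha> [0..<n]) x)"
      unfolding sym_form_eq_average[OF f, of x] by (simp add: sum_divide_distrib)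
  qed
  moreover have "(\<lambda>x. \<Sum>\<alpha>\<in>exps n k. (c \<alpha> / fact n) * aug_monomial n (map \<alpha> [0..<n]) x) \<in> psum_span n k"
  proof (rule psum_span_sum[OF finite_exps])
    fix \<alpha> assume "\<alpha> \<in> exps n k"
    then have "sum_list (map \<alpha> [0..<n]) = k"
      by (simp add: exps_def sum_list_sum_nth atLeast0LessThan)
    then show "(\<lambda>x. (c \<alpha> / fact n) * aug_monomial n (map \<alpha> [0..<n]) x) \<in> psum_span n k"
      using psum_span_smult[OF aug_monomial_in_psum_span[of n "map \<alpha> [0..<n]"], of "c \<alpha> / fact n"] by simp
  qed
  ultimately show "f \<in> psum_span n k" by simp
qed

theorem sym_forms_eq_psum_span: "sym_forms n k = psum_span n k"
  using psum_span_subset_sym_forms sym_forms_subset_psum_span by blast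

section \<open>A normal form for the elements of \<open>T\<close>\<close>

definition T_form ::
    "nat \<Rightarrow> nat \<Rightarrow> (nat multiset \<Rightarrow> real) \<Rightarrow> (nat \<Rightarrow> nat \<Rightarrow> nat multiset \<Rightarrow> real) \<Rightarrow> (nat \<Rightarrow> real) \<Rightarrow> real" where
  "T_form n d c g x = (\<Sum>l\<in>int_partitions d. c l * pmu n l x) +
     (\<Sum>a\<in>{1..d}. \<Sum>i<n. x i ^ a * (\<Sum>\<mu>\<in>int_partitions (d - a). g a i \<mu> * pmu n \<mu> x))"

definition T_normal :: "nat \<Rightarrow> nat \<Rightarrow> ((nat \<Rightarrow> real) \<Rightarrow> real) set" where
  "T_normal n d = {T_form n d c g | c g. \<forall>a \<mu>. (\<Sum>i<n. g a i \<mu>) = 0}"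

lemma T_normalI: "(\<And>a \<mu>. (\<Sum>i<n. g a i \<mu>) = 0) \<Longrightarrow> h = T_form n d c g \<Longrightarrow> h \<in> T_normal n d"
  unfolding T_normal_def by blast

lemma T_form_add:
  "T_form n d c g x + T_form n d c' g' x = T_form n d (\<lambda>l. c l + c' l) (\<lambda>a i \<mu>. g a i \<mu> + g' a i \<mu>) x"
  by (simp add: T_form_def sum.distrib distrib_right distrib_left add_ac)

lemma T_form_smult: "r * T_form n d c g x = T_form n d (\<lambda>l. r * c l) (\<lambda>a i \<mu>. r * g a i \<mu>) x"
  by (simp add: T_form_def sum_distrib_left distrib_left mult_ac)

lemma T_form_permute_vars:
  assumes \<sigma>: "\<sigma> permutes {..<n}"
  shows "T_form n d c g (\<lambda>k. x (\<sigma> k)) = T_form n d c (\<lambda>a j \<mu>. g a (inv \<sigma> j) \<mu>) x"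
proof -
  have "(\<Sum>i<n. x (\<sigma> i) ^ a * (\<Sum>\<mu>\<in>int_partitions (d - a). g a i \<mu> * pmu n \<mu> x)) =
        (\<Sum>j<n. x j ^ a * (\<Sum>\<mu>\<in>int_partitions (d - a). g a (inv \<sigma> j) \<mu> * pmu n \<mu> x))" for a
    using sum_permute_lessThan[OF \<sigma>, of "\<lambda>j. x j ^ a * (\<Sum>\<mu>\<in>int_partitions (d - a). g a (inv \<sigma> j) \<mu> * pmu n \<mu> x)"]
    by (simp add: permutes_inverses[OF \<sigma>])
  then show ?thesis by (simp add: T_form_def pmu_permute_vars[OF \<sigma>])
qed

lemma T_normal_add:
  assumes "f \<in> T_normal n d" "f' \<in> T_normal n d"
  shows "(\<lambda>x. f x + f' x) \<in> T_normal n d"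
proof -
  obtain c g where "f = T_form n d c g" "\<And>a \<mu>. (\<Sum>i<n. g a i \<mu>) = 0"
    using assms(1) unfolding T_normal_def by auto
  moreover obtain c' g' where "f' = T_form n d c' g'" "\<And>a \<mu>. (\<Sum>i<n. g' a i \<mu>) = 0"
    using assms(2) unfolding T_normal_def by auto
  ultimately show ?thesis
    by (intro T_normalI[where c = "\<lambda>l. c l + c' l" and g = "\<lambda>a i \<mu>. g a i \<mu> + g' a i \<mu>"])
      (simp_all add: sum.distrib T_form_add)
qed

lemma T_normal_smult:
  assumes "f \<in> T_normal n d"
  shows "(\<lambda>x. r * f x) \<in> T_normal n d"
proof -
  obtain c g where "f = T_form n d c g" "\<And>a \<mu>. (\<Sum>i<n. g a i \<mu>) = 0"
    using assms unfolding T_normal_def by auto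
  then show ?thesis
    by (intro T_normalI[where c = "\<lambda>l. r * c l" and g = "\<lambda>a i \<mu>. r * g a i \<mu>"])
      (simp_all add: T_form_smult flip: sum_distrib_left)
qed

lemma T_normal_permute_vars:
  assumes "f \<in> T_normal n d" "\<sigma> permutes {..<n}"
  shows "perm_act \<sigma> f \<in> T_normal n d"
proof -
  obtain c g where f: "f = T_form n d c g" and g: "\<And>a \<mu>. (\<Sum>i<n. g a i \<mu>) = 0"
    using assms(1) unfolding T_normal_def by auto
  show ?thesis
  proof (rule T_normalI)
    show "(\<Sum>j<n. g a (inv \<sigma> j) \<mu>) = 0" for a \<mu>
      using sum_permute_lessThan[OF permutes_inv[OF assms(2)], of "\<lambda>i. g a i \<mu>"] g by simp
    show "perm_act \<sigma> f = T_form n d c (\<lambda>a j \<mu>. g a (inv \<sigma> j) \<mu>)"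
      by (simp add: perm_act_def f T_form_permute_vars[OF assms(2)] fun_eq_iff)
  qed
qed

lemma sym_forms_subset_T_normal: "sym_forms n d \<subseteq> T_normal n d"
proof
  fix s assume "s \<in> sym_forms n d"
  then obtain c where "s = (\<lambda>x. \<Sum>\<mu>\<in>int_partitions d. c \<mu> * pmu n \<mu> x)"
    by (auto simp: sym_forms_eq_psum_span psum_span_def)
  then show "s \<in> T_normal n d"
    by (intro T_normalI[where g = "\<lambda>_ _ _. 0" and c = c]) (simp_all add: T_form_def fun_eq_iff)
qed

lemma diff_powers_mult_in_T_normal:
  assumes n: "2 \<le> n" and a: "a \<in> {1..d}" and s: "s \<in> sym_forms n (d - a)"
  shows "(\<lambda>x. (x 0 ^ a - x 1 ^ a) * s x) \<in> T_normal n d"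
proof -
  obtain c where c: "s = (\<lambda>x. \<Sum>\<mu>\<in>int_partitions (d - a). c \<mu> * pmu n \<mu> x)"
    using s by (auto simp: sym_forms_eq_psum_span psum_span_def)
  define \<epsilon> :: "nat \<Rightarrow> real" where "\<epsilon> i = (if i = 0 then 1 else if i = 1 then -1 else 0)" for i
  have sum_\<epsilon>: "(\<Sum>i<n. \<epsilon> i * y i) = y 0 - y 1" for y :: "nat \<Rightarrow> real"
  proof -
    have "(\<Sum>i<n. \<epsilon> i * y i) = (\<Sum>i\<in>{0, 1}. \<epsilon> i * y i)"
      using n by (intro sum.mono_neutral_right) (auto simp: \<epsilon>_def)
    then show ?thesis by (simp add: \<epsilon>_def)
  qed
  show ?thesis
  proof (rule T_normalI[where c = "\<lambda>_. 0" and g = "\<lambda>b i \<mu>. if b = a then \<epsilon> i * c \<mu> else 0"])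
    show "(\<Sum>i<n. if b = a then \<epsilon> i * c \<mu> else 0) = 0" for b \<mu>
      using sum_\<epsilon>[of "\<lambda>_. c \<mu>"] by (cases "b = a") simp_all
    have inner: "(\<Sum>\<mu>\<in>int_partitions (d - b). (if b = a then \<epsilon> i * c \<mu> else 0) * pmu n \<mu> x) =
        (if b = a then \<epsilon> i * s x else 0)" for b i x
      by (simp add: c sum_distrib_left mult.assoc)
    have "T_form n d (\<lambda>_. 0) (\<lambda>b i \<mu>. if b = a then \<epsilon> i * c \<mu> else 0) x =
        (\<Sum>i<n. \<epsilon> i * (x i ^ a * s x))" for x
    proof -
      have "T_form n d (\<lambda>_. 0) (\<lambda>b i \<mu>. if b = a then \<epsilon> i * c \<mu> else 0) x =
          (\<Sum>b\<in>{1..d}. \<Sum>i<n. if b = a then \<epsilon> i * (x i ^ a * s x) else 0)"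
        unfolding T_form_def using inner by (simp add: mult_ac if_distrib[of "\<lambda>z. x _ ^ _ * z"] cong: if_cong)
      also have "\<dots> = (\<Sum>i<n. \<Sum>b\<in>{1..d}. if b = a then \<epsilon> i * (x i ^ a * s x) else 0)"
        by (rule sum.swap)
      finally show ?thesis using a by simp
    qed
    then show "(\<lambda>x. (x 0 ^ a - x 1 ^ a) * s x) = T_form n d (\<lambda>_. 0) (\<lambda>b i \<mu>. if b = a then \<epsilon> i * c \<mu> else 0)"
      by (simp add: sum_\<epsilon> left_diff_distrib fun_eq_iff)
  qed
qed

text \<open>The hypothesis excludes \<open>n \<le> 1\<close>, where \<open>x\<^sub>1\<close> is not a variable and the generators
  \<open>(x\<^sub>0\<^sup>a - x\<^sub>1\<^sup>a) g\<close> are not forms.\<close>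

lemma Tmod_subset_T_normal:
  assumes "d = 0 \<or> 2 \<le> n"
  shows "Tmod n d \<subseteq> T_normal n d"
proof
  fix h assume "h \<in> Tmod n d"
  then show "h \<in> T_normal n d"
  proof (induction rule: Tmod.induct)
    case (gen g)
    then show ?case
      using assms sym_forms_subset_T_normal diff_powers_mult_in_T_normal by (fastforce simp: T_gens_def)
  next
    case zero
    show ?case
      by (rule T_normalI[where c = "\<lambda>_. 0" and g = "\<lambda>_ _ _. 0"]) (simp_all add: T_form_def fun_eq_iff)
  qed (simp_all add: T_normal_add T_normal_smult T_normal_permute_vars)
qed

section \<open>Averaging over the symmetric group\<close>

lemma exists_permutes_pair:
  fixes i j n :: nat
  assumes "i < n" "j < n" "i \<noteq> j"
  shows "\<exists>\<tau>. \<tau> permutes {..<n} \<and> \<tau> 0 = i \<and> \<tau> 1 = j"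
proof -
  define \<rho> where "\<rho> = Transposition.transpose 0 i"
  have \<rho>: "\<rho> permutes {..<n}" unfolding \<rho>_def using assms by (intro permutes_swap_id) auto
  define j' where "j' = \<rho> j"
  have "j' < n" using permutes_in_image[OF \<rho>, of j] assms(2) by (simp add: j'_def)
  moreover have "j' \<noteq> 0" using assms(3) by (auto simp: j'_def \<rho>_def transpose_def)
  moreover have "\<rho> j' = j" by (simp add: j'_def \<rho>_def)
  ultimately have "(\<rho> \<circ> Transposition.transpose 1 j') permutes {..<n} \<and>
      (\<rho> \<circ> Transposition.transpose 1 j') 0 = i \<and> (\<rho> \<circ> Transposition.transpose 1 j') 1 = j"
    using assms \<rho> by (auto intro!: permutes_compose permutes_swap_id simp: \<rho>_def transpose_def)
  then show ?thesis by blast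
qed

lemma sum_permutes_power_var:
  assumes i: "i < n"
  shows "(\<Sum>\<sigma> | \<sigma> permutes {..<n}. x (\<sigma> i) ^ a) = fact n * psum n a x"
proof -
  let ?P = "{\<sigma>. \<sigma> permutes {..<n}}"
  have same: "(\<Sum>\<sigma>\<in>?P. x (\<sigma> k) ^ a) = (\<Sum>\<sigma>\<in>?P. x (\<sigma> 0) ^ a)" if "k < n" for k
  proof -
    have "Transposition.transpose 0 k permutes {..<n}" using that by (intro permutes_swap_id) auto
    from sum_permutations_compose_right[OF this, of "\<lambda>\<sigma>. x (\<sigma> 0) ^ a"] show ?thesis by simp
  qed
  have "real n * (\<Sum>\<sigma>\<in>?P. x (\<sigma> 0) ^ a) = (\<Sum>k<n. \<Sum>\<sigma>\<in>?P. x (\<sigma> 0) ^ a)"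
    by simp
  also have "\<dots> = (\<Sum>k<n. \<Sum>\<sigma>\<in>?P. x (\<sigma> k) ^ a)"
    by (rule sum.cong[OF refl], rule same[symmetric]) simp
  also have "\<dots> = (\<Sum>\<sigma>\<in>?P. \<Sum>k<n. x (\<sigma> k) ^ a)" by (rule sum.swap)
  also have "\<dots> = (\<Sum>\<sigma>\<in>?P. real n * psum n a x)"
    by (intro sum.cong refl) (simp add: sum_power_eq_psum psum_permute_vars)
  also have "\<dots> = fact n * (real n * psum n a x)"
    by (simp add: card_permutes_lessThan)
  finally show ?thesis using i same[OF i] by simp
qed

lemma sum_permutes_weighted_power_sum:
  fixes G :: "nat \<Rightarrow> real"
  assumes "(\<Sum>i<n. G i) = 0"
  shows "(\<Sum>\<sigma> | \<sigma> permutes {..<n}. \<Sum>i<n. x (\<sigma> i) ^ a * G i) = 0"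
proof -
  have "(\<Sum>\<sigma> | \<sigma> permutes {..<n}. \<Sum>i<n. x (\<sigma> i) ^ a * G i) =
      (\<Sum>i<n. (\<Sum>\<sigma> | \<sigma> permutes {..<n}. x (\<sigma> i) ^ a) * G i)"
    by (subst sum.swap) (simp add: sum_distrib_right)
  also have "\<dots> = fact n * psum n a x * (\<Sum>i<n. G i)"
    by (simp add: sum_permutes_power_var sum_distrib_left mult.assoc)
  finally show ?thesis using assms by simp
qed

text \<open>Off the diagonal the average of \<open>x\<^sub>\<sigma>\<^sub>(\<^sub>i\<^sub>)\<^sup>a x\<^sub>\<sigma>\<^sub>(\<^sub>j\<^sub>)\<^sup>b\<close> does not depend on \<open>i \<noteq> j\<close>; its value is read off
  from the total \<open>\<Sum>\<^sub>i\<^sub>,\<^sub>j\<close>, which is \<open>n! (n p\<^sub>a) (n p\<^sub>b)\<close>.\<close>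

lemma sum_permutes_power_vars_off_diag:
  assumes ij: "i < n" "j < n" "i \<noteq> j"
  shows "(\<Sum>\<sigma> | \<sigma> permutes {..<n}. x (\<sigma> i) ^ a * x (\<sigma> j) ^ b) =
    fact n * (real n * psum n a x * psum n b x - psum n (a + b) x) / (real n - 1)"
proof -
  let ?P = "{\<sigma>. \<sigma> permutes {..<n}}"
  define C where "C = (\<Sum>\<sigma>\<in>?P. x (\<sigma> 0) ^ a * x (\<sigma> 1) ^ b)"
  have off: "(\<Sum>\<sigma>\<in>?P. x (\<sigma> k) ^ a * x (\<sigma> l) ^ b) = C" if kl: "k < n" "l < n" "k \<noteq> l" for k l
  proof -
    obtain \<tau> where "\<tau> permutes {..<n}" "\<tau> 0 = k" "\<tau> 1 = l"
      using exists_permutes_pair[OF kl] by blast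
    with sum_permutations_compose_right[of \<tau> _ "\<lambda>\<sigma>. x (\<sigma> 0) ^ a * x (\<sigma> 1) ^ b"]
    show ?thesis by (simp add: C_def)
  qed
  have diag: "(\<Sum>\<sigma>\<in>?P. x (\<sigma> k) ^ a * x (\<sigma> k) ^ b) = fact n * psum n (a + b) x" if "k < n" for k
    using sum_permutes_power_var[OF that, of x "a + b"] by (simp add: power_add)
  have "fact n * (real n * psum n a x) * (real n * psum n b x) =
      (\<Sum>\<sigma>\<in>?P. (real n * psum n a x) * (real n * psum n b x))"
    by (simp add: card_permutes_lessThan)
  also have "\<dots> = (\<Sum>\<sigma>\<in>?P. (\<Sum>k<n. x (\<sigma> k) ^ a) * (\<Sum>l<n. x (\<sigma> l) ^ b))"
    by (intro sum.cong refl) (simp add: sum_power_eq_psum psum_permute_vars)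
  also have "\<dots> = (\<Sum>\<sigma>\<in>?P. \<Sum>k<n. \<Sum>l<n. x (\<sigma> k) ^ a * x (\<sigma> l) ^ b)"
    by (simp add: sum_product)
  also have "\<dots> = (\<Sum>k<n. \<Sum>l<n. \<Sum>\<sigma>\<in>?P. x (\<sigma> k) ^ a * x (\<sigma> l) ^ b)"
    by (subst sum.swap) (simp add: sum.swap[of _ _ ?P])
  also have "\<dots> = (\<Sum>k<n. \<Sum>l<n. C + (if k = l then fact n * psum n (a + b) x - C else 0))"
    by (intro sum.cong refl) (auto simp: off diag)
  also have "\<dots> = real n * (real n * C + (fact n * psum n (a + b) x - C))"
    by (simp add: sum.distrib)
  finally have "real n * (fact n * real n * psum n a x * psum n b x) =
      real n * (real n * C - C + fact n * psum n (a + b) x)"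
    by (simp add: algebra_simps)
  then have "fact n * real n * psum n a x * psum n b x = real n * C - C + fact n * psum n (a + b) x"
    using ij by (subst (asm) mult_left_cancel) auto
  then have "C = fact n * (real n * psum n a x * psum n b x - psum n (a + b) x) / (real n - 1)"
    using ij by (simp add: field_simps)
  with off[OF ij] show ?thesis by simp
qed

lemma sum_permutes_power_vars:
  assumes "2 \<le> n" "i < n" "j < n"
  shows "(\<Sum>\<sigma> | \<sigma> permutes {..<n}. x (\<sigma> i) ^ a * x (\<sigma> j) ^ b) =
    fact n * (real n * psum n a x * psum n b x - psum n (a + b) x) / (real n - 1) +
    (if i = j then fact n * (real n / (real n - 1)) * (psum n (a + b) x - psum n a x * psum n b x) else 0)"
proof (cases "i = j")
  case True
  have "real n - 1 \<noteq> 0" using assms(1) by simp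
  then show ?thesis
    using True sum_permutes_power_var[OF assms(2), of x "a + b"]
    by (simp add: power_add divide_simps) (simp add: algebra_simps)
next
  case False
  then show ?thesis using sum_permutes_power_vars_off_diag[OF assms(2,3)] by simp
qed

text \<open>Only the diagonal part survives when the weights have zero sum; this is where the
  factor \<open>p\<^sub>a\<^sub>+\<^sub>b - p\<^sub>a p\<^sub>b\<close> of the matrix \<open>B\<close> comes from.\<close>

lemma sum_permutes_weighted_power_sums:
  assumes n: "2 \<le> n" and G: "(\<Sum>i<n. G i) = 0"
  shows "(\<Sum>\<sigma> | \<sigma> permutes {..<n}. (\<Sum>i<n. x (\<sigma> i) ^ a * G i) * (\<Sum>j<n. x (\<sigma> j) ^ b * H j)) =
    fact n * (real n / (real n - 1)) * (psum n (a + b) x - psum n a x * psum n b x) * (\<Sum>i<n. G i * H i)"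
proof -
  let ?P = "{\<sigma>. \<sigma> permutes {..<n}}"
  define C where "C = fact n * (real n * psum n a x * psum n b x - psum n (a + b) x) / (real n - 1)"
  define E where "E = fact n * (real n / (real n - 1)) * (psum n (a + b) x - psum n a x * psum n b x)"
  have "(\<Sum>\<sigma>\<in>?P. (\<Sum>i<n. x (\<sigma> i) ^ a * G i) * (\<Sum>j<n. x (\<sigma> j) ^ b * H j)) =
      (\<Sum>\<sigma>\<in>?P. \<Sum>i<n. \<Sum>j<n. G i * H j * (x (\<sigma> i) ^ a * x (\<sigma> j) ^ b))"
    by (simp add: sum_product mult_ac)
  also have "\<dots> = (\<Sum>i<n. \<Sum>j<n. \<Sum>\<sigma>\<in>?P. G i * H j * (x (\<sigma> i) ^ a * x (\<sigma> j) ^ b))"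
    by (subst sum.swap) (simp add: sum.swap[of _ _ ?P])
  also have "\<dots> = (\<Sum>i<n. \<Sum>j<n. G i * H j * (\<Sum>\<sigma>\<in>?P. x (\<sigma> i) ^ a * x (\<sigma> j) ^ b))"
    by (simp add: sum_distrib_left)
  also have "\<dots> = (\<Sum>i<n. \<Sum>j<n. G i * H j * (C + (if i = j then E else 0)))"
    by (intro sum.cong refl) (simp add: sum_permutes_power_vars[OF n] C_def E_def)
  also have "\<dots> = C * (\<Sum>i<n. G i) * (\<Sum>j<n. H j) + E * (\<Sum>i<n. G i * H i)"
    by (simp add: algebra_simps sum.distrib sum_distrib_left sum_distrib_right if_distrib[of "\<lambda>z. _ * z"]
        cong: if_cong)
  finally show ?thesis using G by (simp add: E_def)
qed

lemma sum_permutes_T_form_square: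
  assumes g: "\<And>a \<mu>. (\<Sum>i<n. g a i \<mu>) = 0" and nd: "d = 0 \<or> 2 \<le> n"
  shows "(\<Sum>\<sigma> | \<sigma> permutes {..<n}. (T_form n d c g (\<lambda>k. x (\<sigma> k)))\<^sup>2) =
    fact n * ((\<Sum>l\<in>int_partitions d. c l * pmu n l x)\<^sup>2 +
      (real n / (real n - 1)) * (\<Sum>i<n. \<Sum>a\<in>{1..d}. \<Sum>b\<in>{1..d}.
          (\<Sum>\<mu>\<in>int_partitions (d - a). g a i \<mu> * pmu n \<mu> x) *
          (\<Sum>\<nu>\<in>int_partitions (d - b). g b i \<nu> * pmu n \<nu> x) *
          (psum n (a + b) x - psum n a x * psum n b x)))"
proof -
  let ?P = "{\<sigma>. \<sigma> permutes {..<n}}"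
  define s where "s = (\<Sum>l\<in>int_partitions d. c l * pmu n l x)"
  define G where "G a i = (\<Sum>\<mu>\<in>int_partitions (d - a). g a i \<mu> * pmu n \<mu> x)" for a i
  define Z where "Z a b = psum n (a + b) x - psum n a x * psum n b x" for a b
  define K where "K = real n / (real n - 1)"
  define L where "L a \<sigma> = (\<Sum>i<n. x (\<sigma> i) ^ a * G a i)" for a \<sigma>
  have G0: "(\<Sum>i<n. G a i) = 0" for a
    unfolding G_def by (subst sum.swap) (simp add: g flip: sum_distrib_right)
  have T: "T_form n d c g (\<lambda>k. x (\<sigma> k)) = s + (\<Sum>a\<in>{1..d}. L a \<sigma>)" if "\<sigma> \<in> ?P" for \<sigma>
    using that by (simp add: T_form_def pmu_permute_vars s_def L_def G_def)
  have L: "(\<Sum>\<sigma>\<in>?P. L a \<sigma>) = 0" for a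
    unfolding L_def by (rule sum_permutes_weighted_power_sum[OF G0])
  have LL: "(\<Sum>\<sigma>\<in>?P. L a \<sigma> * L b \<sigma>) = fact n * K * (\<Sum>i<n. G a i * G b i * Z a b)"
    if "a \<in> {1..d}" for a b
  proof -
    have "(\<Sum>\<sigma>\<in>?P. L a \<sigma> * L b \<sigma>) = fact n * K * Z a b * (\<Sum>i<n. G a i * G b i)"
      using that nd unfolding L_def K_def Z_def by (intro sum_permutes_weighted_power_sums G0) auto
    then show ?thesis by (simp add: sum_distrib_left sum_distrib_right mult_ac)
  qed
  have "(\<Sum>\<sigma>\<in>?P. (T_form n d c g (\<lambda>k. x (\<sigma> k)))\<^sup>2) =
      (\<Sum>\<sigma>\<in>?P. s\<^sup>2 + 2 * s * (\<Sum>a\<in>{1..d}. L a \<sigma>) + (\<Sum>a\<in>{1..d}. \<Sum>b\<in>{1..d}. L a \<sigma> * L b \<sigma>))"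
    by (intro sum.cong refl) (simp add: T power2_eq_square algebra_simps sum_product)
  also have "\<dots> = fact n * s\<^sup>2 + 2 * s * (\<Sum>a\<in>{1..d}. \<Sum>\<sigma>\<in>?P. L a \<sigma>) +
      (\<Sum>a\<in>{1..d}. \<Sum>b\<in>{1..d}. \<Sum>\<sigma>\<in>?P. L a \<sigma> * L b \<sigma>)"
    by (simp add: sum.distrib card_permutes_lessThan flip: sum_distrib_left)
      (simp add: sum_distrib_left sum.swap[of _ _ ?P])
  also have "\<dots> = fact n * s\<^sup>2 + fact n * K * (\<Sum>a\<in>{1..d}. \<Sum>b\<in>{1..d}. \<Sum>i<n. G a i * G b i * Z a b)"
    by (simp add: L LL sum_distrib_left)
  also have "\<dots> = fact n * (s\<^sup>2 + K * (\<Sum>i<n. \<Sum>a\<in>{1..d}. \<Sum>b\<in>{1..d}. G a i * G b i * Z a b))"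
    by (subst sum_rotate3[where F = "\<lambda>a b i. G a i * G b i * Z a b"]) (simp only: distrib_left mult.assoc)
  finally show ?thesis by (simp add: s_def G_def Z_def K_def)
qed

section \<open>Positive semidefinite matrices\<close>

lemma psd_on_outer: "psd_on I (\<lambda>i j. w i * w j)"
proof -
  have "(\<Sum>i\<in>I. \<Sum>j\<in>I. v i * (w i * w j) * v j) = (\<Sum>i\<in>I. v i * w i)\<^sup>2" for v
    by (simp add: power2_eq_square sum_product mult_ac)
  then show ?thesis unfolding psd_on_def by (simp add: mult_ac)
qed

lemma psd_on_add: "psd_on I Q \<Longrightarrow> psd_on I Q' \<Longrightarrow> psd_on I (\<lambda>i j. Q i j + Q' i j)"
  unfolding psd_on_def by (simp add: distrib_left distrib_right sum.distrib add_nonneg_nonneg)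

lemma psd_on_scale:
  assumes "psd_on I Q" "0 \<le> r"
  shows "psd_on I (\<lambda>i j. r * Q i j)"
proof -
  have "(\<Sum>i\<in>I. \<Sum>j\<in>I. v i * (r * Q i j) * v j) = r * (\<Sum>i\<in>I. \<Sum>j\<in>I. v i * Q i j * v j)" for v
    by (simp add: sum_distrib_left mult_ac)
  then show ?thesis using assms unfolding psd_on_def by simp
qed

lemma psd_on_sum:
  assumes "finite J" "\<And>k. k \<in> J \<Longrightarrow> psd_on I (Q k)"
  shows "psd_on I (\<lambda>i j. \<Sum>k\<in>J. Q k i j)"
  using assms
proof (induction J rule: finite_induct)
  case empty
  then show ?case by (simp add: psd_on_def)
next
  case (insert k J)
  then show ?case using psd_on_add[of I "Q k" "\<lambda>i j. \<Sum>k\<in>J. Q k i j"] by simp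
qed

lemma quadratic_form_mono_neutral:
  fixes Q :: "'i \<Rightarrow> 'i \<Rightarrow> real"
  assumes "finite I" "J \<subseteq> I" "\<And>i. i \<in> I - J \<Longrightarrow> v i = 0"
  shows "(\<Sum>i\<in>J. \<Sum>j\<in>J. v i * Q i j * v j) = (\<Sum>i\<in>I. \<Sum>j\<in>I. v i * Q i j * v j)"
proof -
  have "(\<Sum>j\<in>J. v i * Q i j * v j) = (\<Sum>j\<in>I. v i * Q i j * v j)" for i
    using assms by (intro sum.mono_neutral_left) (auto intro: finite_subset)
  moreover have "(\<Sum>i\<in>J. \<Sum>j\<in>I. v i * Q i j * v j) = (\<Sum>i\<in>I. \<Sum>j\<in>I. v i * Q i j * v j)"
    using assms by (intro sum.mono_neutral_left) auto
  ultimately show ?thesis by simp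
qed

lemma psd_on_subset:
  assumes "finite I" "J \<subseteq> I" "psd_on I Q"
  shows "psd_on J Q"
  unfolding psd_on_def
proof (intro conjI ballI allI)
  show "Q i j = Q j i" if "i \<in> J" "j \<in> J" for i j
    using assms that by (auto simp: psd_on_def)
  fix v :: "'a \<Rightarrow> real"
  let ?v = "\<lambda>i. if i \<in> J then v i else 0"
  have "(\<Sum>i\<in>J. \<Sum>j\<in>J. v i * Q i j * v j) = (\<Sum>i\<in>J. \<Sum>j\<in>J. ?v i * Q i j * ?v j)"
    by simp
  also have "\<dots> = (\<Sum>i\<in>I. \<Sum>j\<in>I. ?v i * Q i j * ?v j)"
    using assms by (intro quadratic_form_mono_neutral) auto
  finally show "0 \<le> (\<Sum>i\<in>J. \<Sum>j\<in>J. v i * Q i j * v j)"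
    using assms(3) by (simp add: psd_on_def)
qed

lemma quadratic_form_shift:
  fixes Q :: "'i \<Rightarrow> 'i \<Rightarrow> real"
  assumes fin: "finite I" and i0: "i0 \<in> I" and sym: "\<And>i j. i \<in> I \<Longrightarrow> j \<in> I \<Longrightarrow> Q i j = Q j i"
  shows "(\<Sum>i\<in>I. \<Sum>j\<in>I. (v i + (if i = i0 then t else 0)) * Q i j * (v j + (if j = i0 then t else 0))) =
    (\<Sum>i\<in>I. \<Sum>j\<in>I. v i * Q i j * v j) + 2 * t * (\<Sum>j\<in>I. Q i0 j * v j) + t\<^sup>2 * Q i0 i0"
proof -
  let ?e = "\<lambda>i. if i = i0 then t else (0::real)"
  have delta: "(\<Sum>j\<in>I. f j * ?e j) = f i0 * t" "(\<Sum>j\<in>I. ?e j * f j) = t * f i0" for f :: "'i \<Rightarrow> real"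
    using fin i0 by (simp_all add: if_distrib[of "\<lambda>z. f _ * z"] if_distrib[of "\<lambda>z. z * f _"] cong: if_cong)
  have "(\<Sum>i\<in>I. \<Sum>j\<in>I. (v i + ?e i) * Q i j * (v j + ?e j)) =
        (\<Sum>i\<in>I. \<Sum>j\<in>I. v i * Q i j * v j) + (\<Sum>i\<in>I. \<Sum>j\<in>I. (v i * Q i j) * ?e j) +
        (\<Sum>i\<in>I. ?e i * (\<Sum>j\<in>I. Q i j * v j)) + (\<Sum>i\<in>I. ?e i * (\<Sum>j\<in>I. Q i j * ?e j))"
    by (simp add: distrib_left distrib_right sum.distrib sum_distrib_left mult_ac)
  also have "\<dots> = (\<Sum>i\<in>I. \<Sum>j\<in>I. v i * Q i j * v j) + (\<Sum>i\<in>I. v i * Q i0 i) * t +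
        t * (\<Sum>j\<in>I. Q i0 j * v j) + t * (Q i0 i0 * t)"
    using sym[OF _ i0] by (simp add: delta sum_distrib_right cong: sum.cong)
  finally show ?thesis using sym[OF i0] by (simp add: power2_eq_square algebra_simps)
qed

lemma psd_on_shift_nonneg:
  assumes fin: "finite I" and i0: "i0 \<in> I" and Q: "psd_on I Q"
  shows "0 \<le> (\<Sum>i\<in>I. \<Sum>j\<in>I. v i * Q i j * v j) + 2 * t * (\<Sum>j\<in>I. Q i0 j * v j) + t\<^sup>2 * Q i0 i0"
proof -
  have sym: "\<And>i j. i \<in> I \<Longrightarrow> j \<in> I \<Longrightarrow> Q i j = Q j i"
    using Q by (simp add: psd_on_def)
  have "0 \<le> (\<Sum>i\<in>I. \<Sum>j\<in>I. (v i + (if i = i0 then t else 0)) * Q i j * (v j + (if j = i0 then t else 0)))"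
    using Q unfolding psd_on_def by (rule conjunct2[THEN spec])
  then show ?thesis by (simp only: quadratic_form_shift[OF fin i0 sym])
qed

lemma psd_on_zero_diag_row:
  assumes fin: "finite I" and i0: "i0 \<in> I" and j: "j \<in> I" and Q: "psd_on I Q" and "Q i0 i0 = 0"
  shows "Q i0 j = 0"
proof (rule ccontr)
  assume ne: "Q i0 j \<noteq> 0"
  let ?v = "\<lambda>i. if i = j then (1::real) else 0"
  have "(\<Sum>i\<in>I. \<Sum>k\<in>I. ?v i * Q i k * ?v k) = Q j j" "(\<Sum>k\<in>I. Q i0 k * ?v k) = Q i0 j"
    using fin j by (simp_all add: if_distrib[of "\<lambda>z. _ * z"] if_distrib[of "\<lambda>z. z * _"] cong: if_cong)
  then have "0 \<le> Q j j + 2 * (- (Q j j + 1) / (2 * Q i0 j)) * Q i0 j"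
    using psd_on_shift_nonneg[OF fin i0 Q, of ?v "- (Q j j + 1) / (2 * Q i0 j)"] \<open>Q i0 i0 = 0\<close> by simp
  also have "\<dots> = -1" using ne by (simp add: field_simps)
  finally show False by simp
qed

lemma psd_on_Schur_complement:
  assumes fin: "finite I" and i0: "i0 \<in> I" and Q: "psd_on I Q" and q: "0 < Q i0 i0"
  shows "psd_on (I - {i0}) (\<lambda>i j. Q i j - Q i0 i * Q i0 j / Q i0 i0)"
  unfolding psd_on_def
proof (intro conjI ballI allI)
  show "Q i j - Q i0 i * Q i0 j / Q i0 i0 = Q j i - Q i0 j * Q i0 i / Q i0 i0"
    if "i \<in> I - {i0}" "j \<in> I - {i0}" for i j
    using Q that by (auto simp: psd_on_def mult.commute)
  fix v :: "'a \<Rightarrow> real"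
  let ?v = "\<lambda>i. if i = i0 then 0 else v i"
  let ?r = "\<Sum>j\<in>I. Q i0 j * ?v j"
  have "(\<Sum>i\<in>I - {i0}. \<Sum>j\<in>I - {i0}. v i * (Q i j - Q i0 i * Q i0 j / Q i0 i0) * v j) =
      (\<Sum>i\<in>I - {i0}. \<Sum>j\<in>I - {i0}. ?v i * (Q i j - Q i0 i * Q i0 j / Q i0 i0) * ?v j)"
    by simp
  also have "\<dots> = (\<Sum>i\<in>I. \<Sum>j\<in>I. ?v i * (Q i j - Q i0 i * Q i0 j / Q i0 i0) * ?v j)"
    using fin by (intro quadratic_form_mono_neutral) auto
  also have "\<dots> = (\<Sum>i\<in>I. \<Sum>j\<in>I. ?v i * Q i j * ?v j) - ?r\<^sup>2 / Q i0 i0"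
    by (simp add: algebra_simps sum_subtractf power2_eq_square sum_product sum_divide_distrib)
  also have "\<dots> = (\<Sum>i\<in>I. \<Sum>j\<in>I. ?v i * Q i j * ?v j) + 2 * (- ?r / Q i0 i0) * ?r + (- ?r / Q i0 i0)\<^sup>2 * Q i0 i0"
    using q by (simp add: field_simps power2_eq_square)
  finally show "0 \<le> (\<Sum>i\<in>I - {i0}. \<Sum>j\<in>I - {i0}. v i * (Q i j - Q i0 i * Q i0 j / Q i0 i0) * v j)"
    using psd_on_shift_nonneg[OF fin i0 Q, of ?v "- ?r / Q i0 i0"] by simp
qed

lemma psd_on_rank_one_split:
  fixes Q :: "'i \<Rightarrow> 'i \<Rightarrow> real"
  assumes fin: "finite I" and i0: "i0 \<in> I" and Q: "psd_on I Q"
  obtains r where "\<And>j. j \<in> I \<Longrightarrow> Q i0 j = r i0 * r j" "psd_on (I - {i0}) (\<lambda>i j. Q i j - r i * r j)"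
proof (cases "Q i0 i0 = 0")
  case True
  show ?thesis
  proof (rule that[of "\<lambda>_. 0"])
    show "Q i0 j = 0 * 0" if "j \<in> I" for j
      using psd_on_zero_diag_row[OF fin i0 that Q True] by simp
    show "psd_on (I - {i0}) (\<lambda>i j. Q i j - 0 * 0)"
      using psd_on_subset[OF fin _ Q, of "I - {i0}"] by auto
  qed
next
  case False
  have "0 \<le> Q i0 i0" using psd_on_shift_nonneg[OF fin i0 Q, of "\<lambda>_. 0" 1] by simp
  with False have q: "0 < Q i0 i0" by simp
  show ?thesis
  proof (rule that[of "\<lambda>i. Q i0 i / sqrt (Q i0 i0)"])
    show "Q i0 j = Q i0 i0 / sqrt (Q i0 i0) * (Q i0 j / sqrt (Q i0 i0))" for j
      using q by (simp add: field_simps real_sqrt_mult[symmetric])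
    show "psd_on (I - {i0}) (\<lambda>i j. Q i j - Q i0 i / sqrt (Q i0 i0) * (Q i0 j / sqrt (Q i0 i0)))"
      using psd_on_Schur_complement[OF fin i0 Q q] q by (simp add: real_sqrt_mult[symmetric])
  qed
qed

theorem psd_on_Gram:
  fixes Q :: "'i \<Rightarrow> 'i \<Rightarrow> real"
  assumes "finite I" "psd_on I Q"
  shows "\<exists>(m::nat) w. \<forall>i\<in>I. \<forall>j\<in>I. Q i j = (\<Sum>k<m. w k i * w k j)"
  using assms
proof (induction I arbitrary: Q rule: finite_induct)
  case (insert i0 F)
  have sym: "Q i j = Q j i" if "i \<in> insert i0 F" "j \<in> insert i0 F" for i j
    using insert.prems that by (auto simp: psd_on_def)
  obtain r where row: "\<And>j. j \<in> insert i0 F \<Longrightarrow> Q i0 j = r i0 * r j"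
    and rest: "psd_on (insert i0 F - {i0}) (\<lambda>i j. Q i j - r i * r j)"
    using psd_on_rank_one_split[OF _ _ insert.prems] insert.hyps(1) by blast
  obtain m :: nat and w where w: "\<forall>i\<in>F. \<forall>j\<in>F. Q i j - r i * r j = (\<Sum>k<m. w k i * w k j)"
    using insert.IH[of "\<lambda>i j. Q i j - r i * r j"] rest insert.hyps(2) by auto
  define w' where "w' k i = (if k < m then (if i = i0 then 0 else w k i) else r i)" for k i
  have "Q i j = (\<Sum>k<Suc m. w' k i * w' k j)" if "i \<in> insert i0 F" "j \<in> insert i0 F" for i j
  proof -
    have "(\<Sum>k<Suc m. w' k i * w' k j) = (if i = i0 \<or> j = i0 then 0 else Q i j - r i * r j) + r i * r j"
      using w that by (auto simp: w'_def)
    then show ?thesis using row that sym[OF that] by (auto simp: mult.commute)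
  qed
  then show ?case by blast
qed simp

section \<open>Gram representations\<close>

lemma trace_inner_add_left:
  "trace_inner I (\<lambda>p q. X p q + Y p q) M = trace_inner I X M + trace_inner I Y M"
  unfolding trace_inner_def by (simp add: distrib_right sum.distrib)

lemma trace_inner_scale_left: "trace_inner I (\<lambda>p q. r * X p q) M = r * trace_inner I X M"
  unfolding trace_inner_def by (simp add: sum_distrib_left mult_ac)

lemma trace_inner_sum_left:
  "trace_inner I (\<lambda>p q. \<Sum>k\<in>J. X k p q) M = (\<Sum>k\<in>J. trace_inner I (X k) M)"
  unfolding trace_inner_def by (simp add: sum_distrib_right) (rule sum_rotate3)

lemma trace_inner_cong_left:
  "(\<And>p q. p \<in> I \<Longrightarrow> q \<in> I \<Longrightarrow> X p q = Y p q) \<Longrightarrow> trace_inner I X M = trace_inner I Y M"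
  unfolding trace_inner_def by (intro sum.cong refl) auto

lemma trace_inner_Amat_outer:
  "trace_inner (int_partitions d) (\<lambda>l m. c l * c m) (\<lambda>i j. Amat n i j x) =
    (\<Sum>l\<in>int_partitions d. c l * pmu n l x)\<^sup>2"
  unfolding trace_inner_def Amat_def by (simp add: power2_eq_square sum_product mult_ac)

lemma finite_Bidx: "finite (Bidx d)"
  and sum_Bidx: "(\<Sum>p\<in>Bidx d. F p) = (\<Sum>a\<in>{1..d}. \<Sum>\<mu>\<in>int_partitions (d - a). F (a, \<mu>))"
proof -
  have Bidx: "Bidx d = Sigma {1..d} (\<lambda>a. int_partitions (d - a))"
    by (auto simp: Bidx_def)
  then show "finite (Bidx d)" by (simp add: finite_int_partitions)
  show "(\<Sum>p\<in>Bidx d. F p) = (\<Sum>a\<in>{1..d}. \<Sum>\<mu>\<in>int_partitions (d - a). F (a, \<mu>))"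
    unfolding Bidx by (subst sum.Sigma) (auto simp: finite_int_partitions)
qed

lemma trace_inner_Bmat_outer:
  "trace_inner (Bidx d) (\<lambda>p q. w p * w q) (\<lambda>i j. Bmat n i j x) =
   (\<Sum>a\<in>{1..d}. \<Sum>b\<in>{1..d}. (\<Sum>\<mu>\<in>int_partitions (d - a). w (a, \<mu>) * pmu n \<mu> x) *
       (\<Sum>\<nu>\<in>int_partitions (d - b). w (b, \<nu>) * pmu n \<nu> x) * (psum n (a + b) x - psum n a x * psum n b x))"
proof -
  have product: "(\<Sum>\<mu>\<in>A. f \<mu>) * (\<Sum>\<nu>\<in>B. g \<nu>) * z = (\<Sum>\<mu>\<in>A. \<Sum>\<nu>\<in>B. f \<mu> * g \<nu> * z)"
    for A B f g and z :: real
    unfolding sum_product by (simp add: sum_distrib_right)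
  have "trace_inner (Bidx d) (\<lambda>p q. w p * w q) (\<lambda>i j. Bmat n i j x) =
     (\<Sum>a\<in>{1..d}. \<Sum>\<mu>\<in>int_partitions (d - a). \<Sum>b\<in>{1..d}. \<Sum>\<nu>\<in>int_partitions (d - b).
        w (a, \<mu>) * w (b, \<nu>) * (pmu n \<nu> x * pmu n \<mu> x * (psum n (b + a) x - psum n b x * psum n a x)))"
    unfolding trace_inner_def sum_Bidx by (simp add: Bmat_def)
  also have "\<dots> = (\<Sum>a\<in>{1..d}. \<Sum>b\<in>{1..d}. \<Sum>\<mu>\<in>int_partitions (d - a). \<Sum>\<nu>\<in>int_partitions (d - b).
        w (a, \<mu>) * w (b, \<nu>) * (pmu n \<nu> x * pmu n \<mu> x * (psum n (b + a) x - psum n b x * psum n a x)))"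
    by (rule sum.cong[OF refl], rule sum.swap)
  also have "\<dots> = (\<Sum>a\<in>{1..d}. \<Sum>b\<in>{1..d}. (\<Sum>\<mu>\<in>int_partitions (d - a). w (a, \<mu>) * pmu n \<mu> x) *
       (\<Sum>\<nu>\<in>int_partitions (d - b). w (b, \<nu>) * pmu n \<nu> x) * (psum n (a + b) x - psum n a x * psum n b x))"
    unfolding product by (intro sum.cong refl) (simp add: mult_ac add.commute)
  finally show ?thesis .
qed

definition gram_repr :: "nat \<Rightarrow> nat \<Rightarrow> ((nat \<Rightarrow> real) \<Rightarrow> real) \<Rightarrow> bool" where
  "gram_repr n d f \<longleftrightarrow> (\<exists>Q1 Q2. psd_on (int_partitions d) Q1 \<and> psd_on (Bidx d) Q2 \<and>
     f = (\<lambda>x. trace_inner (int_partitions d) Q1 (\<lambda>i j. Amat n i j x)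
             + trace_inner (Bidx d) Q2 (\<lambda>i j. Bmat n i j x)))"

lemma gram_reprI:
  "psd_on (int_partitions d) QA \<Longrightarrow> psd_on (Bidx d) QB \<Longrightarrow>
    (\<And>x. f x = trace_inner (int_partitions d) QA (\<lambda>i j. Amat n i j x)
      + trace_inner (Bidx d) QB (\<lambda>i j. Bmat n i j x)) \<Longrightarrow> gram_repr n d f"
  unfolding gram_repr_def by blast

lemma gram_repr_zero: "gram_repr n d (\<lambda>x. 0)"
  by (rule gram_reprI[where QA = "\<lambda>_ _. 0" and QB = "\<lambda>_ _. 0"]) (simp_all add: psd_on_def trace_inner_def)

lemma gram_repr_add:
  assumes "gram_repr n d f" "gram_repr n d g"
  shows "gram_repr n d (\<lambda>x. f x + g x)"
proof -
  obtain Q1 Q2 R1 R2 where "psd_on (int_partitions d) Q1" "psd_on (Bidx d) Q2"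
    "psd_on (int_partitions d) R1" "psd_on (Bidx d) R2"
    and "f = (\<lambda>x. trace_inner (int_partitions d) Q1 (\<lambda>i j. Amat n i j x) + trace_inner (Bidx d) Q2 (\<lambda>i j. Bmat n i j x))"
    and "g = (\<lambda>x. trace_inner (int_partitions d) R1 (\<lambda>i j. Amat n i j x) + trace_inner (Bidx d) R2 (\<lambda>i j. Bmat n i j x))"
    using assms unfolding gram_repr_def by blast
  then show ?thesis
    by (intro gram_reprI[where QA = "\<lambda>p q. Q1 p q + R1 p q" and QB = "\<lambda>p q. Q2 p q + R2 p q"])
      (simp_all add: psd_on_add trace_inner_add_left)
qed

lemma gram_repr_sum_list:
  "(\<And>h. h \<in> set hs \<Longrightarrow> gram_repr n d (F h)) \<Longrightarrow> gram_repr n d (\<lambda>x. \<Sum>h\<leftarrow>hs. F h x)"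
  by (induction hs) (auto intro: gram_repr_zero gram_repr_add)

text \<open>Averaging the square of \<open>h \<in> T\<close> over \<open>S\<^sub>n\<close> yields \<open>Q\<^sub>1 = c c\<^sup>T\<close> and
  \<open>Q\<^sub>2 = n/(n-1) \<Sum>\<^sub>i g\<^sub>i g\<^sub>i\<^sup>T\<close>, with \<open>c\<close> and \<open>g\<^sub>i\<close> the coefficients of the normal form of \<open>h\<close>.\<close>

lemma T_normal_average_square_gram_repr:
  assumes "h \<in> T_normal n d" and nd: "d = 0 \<or> 2 \<le> n"
  shows "gram_repr n d (\<lambda>x. (\<Sum>\<sigma> | \<sigma> permutes {..<n}. (h (\<lambda>k. x (\<sigma> k)))\<^sup>2) / fact n)"
proof -
  obtain c g where h: "h = T_form n d c g" and g: "\<And>a \<mu>. (\<Sum>i<n. g a i \<mu>) = 0"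
    using assms unfolding T_normal_def by auto
  define K where "K = real n / (real n - 1)"
  have "0 \<le> K" unfolding K_def by (cases n) auto
  show ?thesis
  proof (rule gram_reprI)
    show "psd_on (int_partitions d) (\<lambda>l m. c l * c m)" by (rule psd_on_outer)
    show "psd_on (Bidx d) (\<lambda>p q. \<Sum>i<n. K * (g (fst p) i (snd p) * g (fst q) i (snd q)))"
      using \<open>0 \<le> K\<close> by (intro psd_on_sum psd_on_scale psd_on_outer) simp_all
    fix x
    have "(\<Sum>\<sigma> | \<sigma> permutes {..<n}. (h (\<lambda>k. x (\<sigma> k)))\<^sup>2) / fact n =
        (\<Sum>l\<in>int_partitions d. c l * pmu n l x)\<^sup>2 + K * (\<Sum>i<n. \<Sum>a\<in>{1..d}. \<Sum>b\<in>{1..d}.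
          (\<Sum>\<mu>\<in>int_partitions (d - a). g a i \<mu> * pmu n \<mu> x) *
          (\<Sum>\<nu>\<in>int_partitions (d - b). g b i \<nu> * pmu n \<nu> x) *
          (psum n (a + b) x - psum n a x * psum n b x))"
      using sum_permutes_T_form_square[OF g nd, where c = c and x = x] by (simp add: h K_def)
    also have "\<dots> = trace_inner (int_partitions d) (\<lambda>l m. c l * c m) (\<lambda>i j. Amat n i j x) +
        trace_inner (Bidx d) (\<lambda>p q. \<Sum>i<n. K * (g (fst p) i (snd p) * g (fst q) i (snd q))) (\<lambda>i j. Bmat n i j x)"
      by (simp add: trace_inner_Amat_outer trace_inner_sum_left trace_inner_scale_left
          trace_inner_Bmat_outer[of d "\<lambda>p. g (fst p) _ (snd p)"] sum_distrib_left)
    finally show "(\<Sum>\<sigma> | \<sigma> permutes {..<n}. (h (\<lambda>k. x (\<sigma> k)))\<^sup>2) / fact n =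
        trace_inner (int_partitions d) (\<lambda>l m. c l * c m) (\<lambda>i j. Amat n i j x) +
        trace_inner (Bidx d) (\<lambda>p q. \<Sum>i<n. K * (g (fst p) i (snd p) * g (fst q) i (snd q))) (\<lambda>i j. Bmat n i j x)" .
  qed
qed

lemma sos_Tmod_imp_gram_repr:
  assumes nd: "d = 0 \<or> 2 \<le> n" and f: "f \<in> sym_forms n k" and sos: "sos_of (Tmod n d) f"
  shows "gram_repr n d f"
proof -
  let ?P = "{\<sigma>. \<sigma> permutes {..<n}}"
  obtain hs where hs: "set hs \<subseteq> Tmod n d" and f_hs: "f = (\<lambda>x. \<Sum>h\<leftarrow>hs. (h x)\<^sup>2)"
    using sos unfolding sos_of_def by blast
  have average_sum_list: "(\<Sum>\<sigma>\<in>?P. \<Sum>h\<leftarrow>hs'. G h \<sigma>) / r = (\<Sum>h\<leftarrow>hs'. (\<Sum>\<sigma>\<in>?P. G h \<sigma>) / r)"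
    for hs' and G :: "_ \<Rightarrow> _ \<Rightarrow> real" and r
    by (induction hs') (simp_all add: sum.distrib add_divide_distrib)
  have f_avg: "f = (\<lambda>x. \<Sum>h\<leftarrow>hs. (\<Sum>\<sigma>\<in>?P. (h (\<lambda>k. x (\<sigma> k)))\<^sup>2) / fact n)"
  proof
    fix x
    show "f x = (\<Sum>h\<leftarrow>hs. (\<Sum>\<sigma>\<in>?P. (h (\<lambda>k. x (\<sigma> k)))\<^sup>2) / fact n)"
      unfolding sym_form_eq_average[OF f, of x]
      by (simp add: f_hs average_sum_list)
  qed
  have "gram_repr n d (\<lambda>x. \<Sum>h\<leftarrow>hs. (\<Sum>\<sigma>\<in>?P. (h (\<lambda>k. x (\<sigma> k)))\<^sup>2) / fact n)"
    using hs Tmod_subset_T_normal[OF nd]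
    by (intro gram_repr_sum_list T_normal_average_square_gram_repr nd) auto
  with f_avg show ?thesis by simp
qed

section \<open>Sums of squares of elements of \<open>T\<close>\<close>

lemma sos_of_zero: "sos_of S (\<lambda>x. 0)"
  unfolding sos_of_def by (intro exI[of _ "[]"]) simp

lemma sos_of_add:
  assumes "sos_of S f" "sos_of S g"
  shows "sos_of S (\<lambda>x. f x + g x)"
proof -
  obtain hs hs' where "set hs \<subseteq> S" "f = (\<lambda>x. \<Sum>h\<leftarrow>hs. (h x)\<^sup>2)"
    and "set hs' \<subseteq> S" "g = (\<lambda>x. \<Sum>h\<leftarrow>hs'. (h x)\<^sup>2)"
    using assms unfolding sos_of_def by blast
  then show ?thesis unfolding sos_of_def by (intro exI[of _ "hs @ hs'"]) simp
qed

lemma sos_of_square: "h \<in> S \<Longrightarrow> sos_of S (\<lambda>x. (h x)\<^sup>2)"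
  unfolding sos_of_def by (intro exI[of _ "[h]"]) simp

lemma sos_of_sum:
  assumes "finite J" "\<And>j. j \<in> J \<Longrightarrow> sos_of S (f j)"
  shows "sos_of S (\<lambda>x. \<Sum>j\<in>J. f j x)"
  using assms by (induction J rule: finite_induct) (auto intro: sos_of_zero sos_of_add)

lemma Tmod_sum:
  assumes "finite J" "\<And>j. j \<in> J \<Longrightarrow> f j \<in> Tmod n d"
  shows "(\<lambda>x. \<Sum>j\<in>J. f j x) \<in> Tmod n d"
  using assms by (induction J rule: finite_induct) (auto intro: Tmod.zero Tmod.add)

lemma diff_powers_mult_in_Tmod:
  assumes a: "a \<in> {1..d}" and s: "s \<in> sym_forms n (d - a)" and ij: "i < n" "j < n"
  shows "(\<lambda>x. (x i ^ a - x j ^ a) * s x) \<in> Tmod n d"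
proof (cases "i = j")
  case True
  then show ?thesis using Tmod.zero by simp
next
  case False
  obtain \<tau> where \<tau>: "\<tau> permutes {..<n}" "\<tau> 0 = i" "\<tau> 1 = j"
    using exists_permutes_pair[OF ij False] by blast
  have "(\<lambda>x. (x 0 ^ a - x 1 ^ a) * s x) \<in> Tmod n d"
    by (rule Tmod.gen) (use a s in \<open>auto simp: T_gens_def\<close>)
  from Tmod.perm[OF this \<tau>(1)] have "perm_act \<tau> (\<lambda>x. (x 0 ^ a - x 1 ^ a) * s x) \<in> Tmod n d" .
  moreover have "perm_act \<tau> s = s" using s \<tau>(1) by (simp add: sym_forms_def)
  ultimately show ?thesis using \<tau>(2,3) by (simp add: perm_act_def fun_eq_iff)
qed

lemma sum_diff_powers_products:
  "(\<Sum>i<n. \<Sum>j<n. (x i ^ a - x j ^ a) * (x i ^ b - x j ^ b)) =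
     2 * (real n)\<^sup>2 * (psum n (a + b) x - psum n a x * psum n b x)"
proof -
  have "(x i ^ a - x j ^ a) * (x i ^ b - x j ^ b) =
      x i ^ (a + b) - x i ^ a * x j ^ b - x j ^ a * x i ^ b + x j ^ (a + b)" for i j
    by (simp add: algebra_simps power_add)
  then have "(\<Sum>i<n. \<Sum>j<n. (x i ^ a - x j ^ a) * (x i ^ b - x j ^ b)) =
      (\<Sum>i<n. \<Sum>j<n. x i ^ (a + b)) - (\<Sum>i<n. \<Sum>j<n. x i ^ a * x j ^ b)
      - (\<Sum>i<n. \<Sum>j<n. x j ^ a * x i ^ b) + (\<Sum>i<n. \<Sum>j<n. x j ^ (a + b))"
    by (simp only: sum.distrib sum_subtractf)
  also have "\<dots> = 2 * real n * (\<Sum>i<n. x i ^ (a + b)) - 2 * (\<Sum>i<n. x i ^ a) * (\<Sum>j<n. x j ^ b)"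
    by (simp add: sum_product sum.swap[of "\<lambda>i j. x j ^ a * x i ^ b"] flip: sum_distrib_left)
  finally show ?thesis by (simp add: sum_power_eq_psum power2_eq_square algebra_simps)
qed

lemma sum_squares_diff_powers_combination:
  "(\<Sum>i<n. \<Sum>j<n. (\<Sum>a\<in>A. (x i ^ a - x j ^ a) * G a)\<^sup>2) =
     2 * (real n)\<^sup>2 * (\<Sum>a\<in>A. \<Sum>b\<in>A. G a * G b * (psum n (a + b) x - psum n a x * psum n b x))"
proof -
  have "(\<Sum>i<n. \<Sum>j<n. (\<Sum>a\<in>A. (x i ^ a - x j ^ a) * G a)\<^sup>2) =
      (\<Sum>i<n. \<Sum>j<n. \<Sum>a\<in>A. \<Sum>b\<in>A. G a * G b * ((x i ^ a - x j ^ a) * (x i ^ b - x j ^ b)))"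
    by (simp add: power2_eq_square sum_product mult_ac)
  also have "\<dots> = (\<Sum>a\<in>A. \<Sum>b\<in>A. G a * G b * (\<Sum>i<n. \<Sum>j<n. (x i ^ a - x j ^ a) * (x i ^ b - x j ^ b)))"
    by (simp only: sum_distrib_left) (subst sum_rotate3, subst (2) sum_rotate3, rule refl)
  also have "\<dots> = 2 * (real n)\<^sup>2 * (\<Sum>a\<in>A. \<Sum>b\<in>A. G a * G b * (psum n (a + b) x - psum n a x * psum n b x))"
    by (simp add: sum_diff_powers_products sum_distrib_left mult_ac)
  finally show ?thesis .
qed

lemma sos_trace_Bmat_outer:
  "sos_of (Tmod n d) (\<lambda>x. trace_inner (Bidx d) (\<lambda>p q. w p * w q) (\<lambda>i j. Bmat n i j x))"
proof (cases "n = 0")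
  case True
  then show ?thesis using sos_of_zero by (simp add: trace_inner_def Bmat_def psum_def)
next
  case False
  define G where "G a x = (\<Sum>\<mu>\<in>int_partitions (d - a). w (a, \<mu>) * pmu n \<mu> x)" for a x
  define c where "c = 1 / (sqrt 2 * real n)"
  have c: "c\<^sup>2 * (2 * (real n)\<^sup>2) = 1"
    using False by (simp add: c_def power2_eq_square real_sqrt_mult[symmetric])
  define h where "h i j x = c * (\<Sum>a\<in>{1..d}. (x i ^ a - x j ^ a) * G a x)" for i j x
  have "h i j \<in> Tmod n d" if "i < n" "j < n" for i j
  proof -
    have "(\<lambda>x. \<Sum>a\<in>{1..d}. \<Sum>\<mu>\<in>int_partitions (d - a). (c * w (a, \<mu>)) * ((x i ^ a - x j ^ a) * pmu n \<mu> x))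
        \<in> Tmod n d"
      using that by (intro Tmod_sum Tmod.smult diff_powers_mult_in_Tmod finite_int_partitions)
        (auto intro: psum_span_subset_sym_forms[THEN subsetD] pmu_in_psum_span)
    moreover have "h i j = (\<lambda>x. \<Sum>a\<in>{1..d}. \<Sum>\<mu>\<in>int_partitions (d - a).
        (c * w (a, \<mu>)) * ((x i ^ a - x j ^ a) * pmu n \<mu> x))"
      by (simp add: h_def G_def sum_distrib_left mult_ac fun_eq_iff)
    ultimately show ?thesis by simp
  qed
  then have "sos_of (Tmod n d) (\<lambda>x. \<Sum>i<n. \<Sum>j<n. (h i j x)\<^sup>2)"
    by (intro sos_of_sum sos_of_square) auto
  moreover have "(\<Sum>i<n. \<Sum>j<n. (h i j x)\<^sup>2) =
      (\<Sum>a\<in>{1..d}. \<Sum>b\<in>{1..d}. G a x * G b x * (psum n (a + b) x - psum n a x * psum n b x))" for x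
  proof -
    have "(\<Sum>i<n. \<Sum>j<n. (h i j x)\<^sup>2) = c\<^sup>2 * (\<Sum>i<n. \<Sum>j<n. (\<Sum>a\<in>{1..d}. (x i ^ a - x j ^ a) * G a x)\<^sup>2)"
      by (simp add: h_def power_mult_distrib flip: sum_distrib_left)
    also have "\<dots> = (c\<^sup>2 * (2 * (real n)\<^sup>2)) *
        (\<Sum>a\<in>{1..d}. \<Sum>b\<in>{1..d}. G a x * G b x * (psum n (a + b) x - psum n a x * psum n b x))"
      unfolding sum_squares_diff_powers_combination by (rule mult.assoc[symmetric])
    finally show ?thesis by (simp add: c)
  qed
  ultimately show ?thesis by (simp add: trace_inner_Bmat_outer G_def)
qed

lemma sos_trace_Amat_outer:
  "sos_of (Tmod n d) (\<lambda>x. trace_inner (int_partitions d) (\<lambda>p q. w p * w q) (\<lambda>i j. Amat n i j x))"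
proof -
  have "(\<lambda>x. \<Sum>l\<in>int_partitions d. w l * pmu n l x) \<in> sym_forms n d"
    using psum_span_subset_sym_forms by (auto intro: psum_spanI)
  then have "(\<lambda>x. \<Sum>l\<in>int_partitions d. w l * pmu n l x) \<in> Tmod n d"
    by (intro Tmod.gen) (simp add: T_gens_def)
  then show ?thesis unfolding trace_inner_Amat_outer by (rule sos_of_square)
qed

lemma gram_repr_imp_sos_Tmod:
  assumes "gram_repr n d f"
  shows "sos_of (Tmod n d) f"
proof -
  obtain Q1 Q2 where Q1: "psd_on (int_partitions d) Q1" and Q2: "psd_on (Bidx d) Q2"
    and f: "f = (\<lambda>x. trace_inner (int_partitions d) Q1 (\<lambda>i j. Amat n i j x)
               + trace_inner (Bidx d) Q2 (\<lambda>i j. Bmat n i j x))"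
    using assms unfolding gram_repr_def by blast
  obtain m1 :: nat and w1 where w1: "\<forall>i\<in>int_partitions d. \<forall>j\<in>int_partitions d.
      Q1 i j = (\<Sum>k<m1. w1 k i * w1 k j)"
    using psd_on_Gram[OF finite_int_partitions Q1] by blast
  obtain m2 :: nat and w2 where w2: "\<forall>i\<in>Bidx d. \<forall>j\<in>Bidx d. Q2 i j = (\<Sum>k<m2. w2 k i * w2 k j)"
    using psd_on_Gram[OF finite_Bidx Q2] by blast
  have "trace_inner (int_partitions d) Q1 M =
      (\<Sum>k<m1. trace_inner (int_partitions d) (\<lambda>p q. w1 k p * w1 k q) M)" for M
  proof -
    have "trace_inner (int_partitions d) Q1 M = trace_inner (int_partitions d) (\<lambda>p q. \<Sum>k<m1. w1 k p * w1 k q) M"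
      using w1 by (intro trace_inner_cong_left) blast
    then show ?thesis by (simp only: trace_inner_sum_left)
  qed
  moreover have "trace_inner (Bidx d) Q2 M = (\<Sum>k<m2. trace_inner (Bidx d) (\<lambda>p q. w2 k p * w2 k q) M)" for M
  proof -
    have "trace_inner (Bidx d) Q2 M = trace_inner (Bidx d) (\<lambda>p q. \<Sum>k<m2. w2 k p * w2 k q) M"
      using w2 by (intro trace_inner_cong_left) blast
    then show ?thesis by (simp only: trace_inner_sum_left)
  qed
  moreover have "sos_of (Tmod n d) (\<lambda>x.
      (\<Sum>k<m1. trace_inner (int_partitions d) (\<lambda>p q. w1 k p * w1 k q) (\<lambda>i j. Amat n i j x)) +
      (\<Sum>k<m2. trace_inner (Bidx d) (\<lambda>p q. w2 k p * w2 k q) (\<lambda>i j. Bmat n i j x)))"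
    by (intro sos_of_add sos_of_sum sos_trace_Amat_outer sos_trace_Bmat_outer finite_lessThan)
  ultimately show ?thesis by (simp add: f)
qed

text \<open>The hypothesis \<open>2 d \<le> n\<close> of the paper is only needed in the weaker form \<open>d = 0 \<or> 2 \<le> n\<close>.\<close>

theorem lemma5p1:
  fixes n d :: nat and f :: "(nat \<Rightarrow> real) \<Rightarrow> real"
  assumes "2 * d \<le> n"
    and "f \<in> sym_forms n (2 * d)"
  shows "sos_of (Tmod n d) f \<longleftrightarrow>
    (\<exists>Q1 Q2. psd_on (int_partitions d) Q1 \<and> psd_on (Bidx d) Q2 \<and>
       f = (\<lambda>x. trace_inner (int_partitions d) Q1 (\<lambda>i j. Amat n i j x)
               + trace_inner (Bidx d) Q2 (\<lambda>i j. Bmat n i j x)))"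
proof -
  have "d = 0 \<or> 2 \<le> n" using assms(1) by auto
  then show ?thesis
    using sos_Tmod_imp_gram_repr[OF _ assms(2)] gram_repr_imp_sos_Tmod
    unfolding gram_repr_def[symmetric] by blast
qed

end
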